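(* Let $\nu$ be a Borel probability measure on $\operatorname{Hom}(\mathbb{S}^1)$ such that $\Gamma_\nu$ is proximal and does not fix any point in $\mathbb{S}^1$, and let $q\in(0,1)$ be a local contraction rate of $\nu$. Then for every $x,y\in\mathbb{S}^1$ with $x\neq y$ and $\nu^{\mathbb{N}}$-almost every $\omega\in X_\nu^{\mathbb{N}}$, $$\lim_{n\to\infty}\frac1n\log\operatorname{diam} f^n_\omega([x,y])\le\log q\quad\text{or}\quad\lim_{n\to\infty}\frac1n\log\operatorname{diam} f^n_\omega([y,x])\le\log q.$$
   Context: $\mathbb{S}^1=\mathbb{R}/\mathbb{Z}$ with usual metric $d$; $\operatorname{Hom}(\mathbb{S}^1)$ is the group of all homeomorphisms of $\mathbb{S}^1$. $X_\nu$ is the topological support of $\nu$, $\Gamma_\nu$ the semigroup generated by $X_\nu$. $\Gamma_\nu$ is proximal if for all $x,y$ there exists $(g_n)$ in $\Gamma_\nu$ with $d(g_n(x),g_n(y))\to0$; it does not fix any point if there is no $x$ with $f(x)=x$ for all $f\in\Gamma_\nu$. For $\omega=(f_n)\in X_\nu^{\mathbb{N}}$ (with product measure $\nu^{\mathbb{N}}$), $f^n_\omega=f_n\circ\cdots\circ f_1$. For $x\ne y$, $[x,y]$ and $[y,x]$ denote the two closed arcs of $\mathbb{S}^1$ with endpoints $x,y$. $\nu$ is locally contracting with local contraction rate $q\in(0,1)$ if for every $x\in\mathbb{S}^1$ and $\nu^{\mathbb{N}}$-a.e. $\omega$ there is an interval $I$ with $x$ in its interior such that $\operatorname{diam} f^n_\omega(I)\le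 q^n$ for all $n$ (such a $q$ exists under the hypotheses). *)

theory Defs
  imports "HOL-Probability.Probability"
begin

text \<open>The circle S^1 = R/Z, represented by the fundamental domain [0,1),
  with the usual quotient metric.\<close>

definition circle :: "real set" where
  "circle = {0..<1}"

definition cdist :: "real \<Rightarrow> real \<Rightarrow> real" where
  "cdist x y = min \<bar>x - y\<bar> (1 - \<bar>x - y\<bar>)"

definition cdiam :: "real set \<Rightarrow> real" where
  "cdiam A = Sup {cdist a b | a b. a \<in> A \<and> b \<in> A}"

definition ccont :: "(real \<Rightarrow> real) \<Rightarrow> bool" where
  "ccont f \<longleftrightarrow> (\<forall>x\<in>circle. \<forall>e>0. \<exists>d>0. \<forall>y\<in>circle.
       cdist x y < d \<longrightarrow> cdist (f x) (f y) < e)"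

definition HomS1 :: "(real \<Rightarrow> real) set" where
  "HomS1 = {f. f \<in> extensional circle \<and> bij_betw f circle circle \<and> ccont f
              \<and> ccont (inv_into circle f)}"

definition hdist :: "(real \<Rightarrow> real) \<Rightarrow> (real \<Rightarrow> real) \<Rightarrow> real" where
  "hdist f g = Sup {cdist (f x) (g x) | x. x \<in> circle}"

definition hopen :: "(real \<Rightarrow> real) set \<Rightarrow> bool" where
  "hopen U \<longleftrightarrow> U \<subseteq> HomS1 \<and>
     (\<forall>f\<in>U. \<exists>e>0. \<forall>g\<in>HomS1. hdist f g < e \<longrightarrow> g \<in> U)"

definition borel_HomS1 :: "(real \<Rightarrow> real) set set" where
  "borel_HomS1 = sigma_sets HomS1 {U. hopen U}"

definition support :: "(real \<Rightarrow> real) measure \<Rightarrow> (real \<Rightarrow> real) set" where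
  "support \<nu> = {f \<in> HomS1. \<forall>U. hopen U \<and> f \<in> U \<longrightarrow> emeasure \<nu> U > 0}"

inductive_set gen_semigroup :: "(real \<Rightarrow> real) set \<Rightarrow> (real \<Rightarrow> real) set"
  for X where
  base: "f \<in> X \<Longrightarrow> f \<in> gen_semigroup X"
| comp: "f \<in> gen_semigroup X \<Longrightarrow> g \<in> gen_semigroup X \<Longrightarrow>
           restrict (f \<circ> g) circle \<in> gen_semigroup X"

definition proximal :: "(real \<Rightarrow> real) set \<Rightarrow> bool" where
  "proximal G \<longleftrightarrow> (\<forall>x\<in>circle. \<forall>y\<in>circle. \<exists>g::nat \<Rightarrow> real \<Rightarrow> real.
      (\<forall>n. g n \<in> G) \<and> (\<lambda>n. cdist (g n x) (g n y)) \<longlonglongrightarrow> 0)"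

definition fixes_point :: "(real \<Rightarrow> real) set \<Rightarrow> bool" where
  "fixes_point G \<longleftrightarrow> (\<exists>x\<in>circle. \<forall>f\<in>G. f x = x)"

text \<open>Random walk: f^n_omega = f_n o ... o f_1, where f_(k+1) = omega k.\<close>

primrec itc :: "(nat \<Rightarrow> real \<Rightarrow> real) \<Rightarrow> nat \<Rightarrow> real \<Rightarrow> real" where
  "itc \<omega> 0 x = x"
| "itc \<omega> (Suc n) x = \<omega> n (itc \<omega> n x)"

text \<open>Closed arc [x,y] from x to y in the positive direction, and the open arc.\<close>

definition carc :: "real \<Rightarrow> real \<Rightarrow> real set" where
  "carc x y = (if x \<le> y then {x..y} else {x..<1} \<union> {0..y})"

definition oarc :: "real \<Rightarrow> real \<Rightarrow> real set" where
  "oarc x y = (if x < y then {x<..<y} else {x<..<1} \<union> {0..<y})"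

definition prod_measure :: "(real \<Rightarrow> real) measure \<Rightarrow> (nat \<Rightarrow> real \<Rightarrow> real) measure" where
  "prod_measure \<nu> = PiM UNIV (\<lambda>_::nat. \<nu>)"

definition local_contraction_rate :: "(real \<Rightarrow> real) measure \<Rightarrow> real \<Rightarrow> bool" where
  "local_contraction_rate \<nu> q \<longleftrightarrow> 0 < q \<and> q < 1 \<and>
     (\<forall>x\<in>circle. AE \<omega> in prod_measure \<nu>.
        \<exists>a\<in>circle. \<exists>b\<in>circle. a \<noteq> b \<and> x \<in> oarc a b \<and>
          (\<forall>n. cdiam (itc \<omega> n ` carc a b) \<le> q ^ n))"

end

theory Submission
  imports Defs
begin

text \<open>Say that the walk contracts near a set \<open>S\<close> if all pairs of points close to a common point
  of \<open>S\<close> are contracted at rate \<open>C q\<^sup>n\<close>. By the local contraction rate and compactness there is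
  one radius \<open>r\<close> such that, whatever its centre, the walk fails to contract near the \<open>r\<close>-ball
  with probability less than \<open>\<epsilon>\<close>. By proximality, and since the walk follows every element of
  \<open>\<Gamma>\<^sub>\<nu>\<close> with positive probability, any two points are brought into a common \<open>r\<close>-ball
  with probability at least \<open>c\<close> in boundedly many steps, uniformly in the two points.
  Repeating such trials, the images of \<open>x\<close> and \<open>y\<close> fall into a common \<open>r\<close>-ball before the
  \<open>K\<close>-th trial except with probability \<open>(1 - c)\<^sup>K\<close>. One of the two arcs between the images lies in
  that ball, and the independent future walk contracts the ball except with probability \<open>\<epsilon>\<close>;
  pulled back, one of the arcs \<open>[x, y]\<close>, \<open>[y, x]\<close> is contracted. Contraction of close pairs along
  an arc finally bounds the diameter of its image by a multiple of \<open>q\<^sup>n\<close>.\<close>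

section \<open>Arcs of the circle\<close>

lemma cdist_commute: "cdist x y = cdist y x"
  by (simp add: cdist_def abs_minus_commute)

lemma cdist_self [simp]: "cdist x x = 0"
  by (simp add: cdist_def)

lemma cdist_le_half: "cdist x y \<le> 1/2"
  by (simp add: cdist_def min_def)

lemma cdist_le_abs: "cdist x y \<le> \<bar>x - y\<bar>"
  by (simp add: cdist_def)

lemma cdist_nonneg: "x \<in> circle \<Longrightarrow> y \<in> circle \<Longrightarrow> 0 \<le> cdist x y"
  by (auto simp: cdist_def circle_def)

lemma cdist_pos: "x \<in> circle \<Longrightarrow> y \<in> circle \<Longrightarrow> x \<noteq> y \<Longrightarrow> 0 < cdist x y"
  by (auto simp: cdist_def circle_def)

lemma cdist_triangle:
  "x \<in> circle \<Longrightarrow> y \<in> circle \<Longrightarrow> z \<in> circle \<Longrightarrow> cdist x z \<le> cdist x y + cdist y z"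
  unfolding cdist_def circle_def by (auto simp: min_def abs_if split: if_splits)

lemma cdist_le_abs_add_int:
  assumes "x \<in> circle" "y \<in> circle"
  shows "cdist x y \<le> \<bar>x - y + of_int k\<bar>"
proof (cases "k = 0")
  case False
  then have "1 \<le> \<bar>real_of_int k\<bar>" by linarith
  then show ?thesis using assms by (auto simp: cdist_def circle_def)
qed (simp add: cdist_def)

lemma frac_in_circle [simp]: "frac s \<in> circle"
  by (simp add: circle_def frac_lt_1)

lemma frac_circle_id: "x \<in> circle \<Longrightarrow> frac x = x"
  by (simp add: circle_def)

lemma cdist_frac_le: "cdist (frac s) (frac t) \<le> \<bar>s - t\<bar>"
proof -
  have "frac s - frac t + of_int (\<lfloor>s\<rfloor> - \<lfloor>t\<rfloor>) = s - t"
    by (simp add: frac_def)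
  then show ?thesis
    using cdist_le_abs_add_int[of "frac s" "frac t" "\<lfloor>s\<rfloor> - \<lfloor>t\<rfloor>"] by simp
qed

lemma cdist_lift:
  assumes "t \<in> circle" "t' \<in> circle"
  obtains \<delta> where "\<bar>\<delta>\<bar> = cdist t t'" "t' = frac (t + \<delta>)"
proof -
  consider "\<bar>t' - t\<bar> \<le> 1/2" | "t' - t > 1/2" | "t - t' > 1/2" by linarith
  then show thesis
  proof cases
    case 1
    then show thesis using assms by (intro that[of "t' - t"]) (auto simp: cdist_def frac_circle_id abs_minus_commute)
  next
    case 2
    have "frac (t + (t' - t - 1)) = t'"
      using assms frac_add_of_int_right[of "t' - 1" 1] by (simp add: frac_circle_id)
    then show thesis using 2 assms by (intro that[of "t' - t - 1"]) (auto simp: cdist_def circle_def)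
  next
    case 3
    have "frac (t + (t' - t + 1)) = t'"
      using assms frac_add_of_int_right[of t' 1] by (simp add: frac_circle_id)
    then show thesis using 3 assms by (intro that[of "t' - t + 1"]) (auto simp: cdist_def circle_def)
  qed
qed

definition ccball :: "real \<Rightarrow> real \<Rightarrow> real set" where
  "ccball w \<rho> = {t \<in> circle. cdist w t \<le> \<rho>}"

lemma ccball_mono: "r \<le> r' \<Longrightarrow> ccball c r \<subseteq> ccball c r'"
  by (auto simp: ccball_def)

definition copen :: "real set \<Rightarrow> bool" where
  "copen U \<longleftrightarrow> (\<forall>t\<in>U. \<exists>\<rho>>0. \<forall>t'\<in>circle. cdist t t' < \<rho> \<longrightarrow> t' \<in> U)"

lemma open_frac_vimage:
  assumes "copen U"
  shows "open {s. frac s \<in> U}"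
  unfolding open_dist
proof (intro ballI)
  fix s assume "s \<in> {s. frac s \<in> U}"
  then obtain \<rho> where "\<rho> > 0" "\<forall>t'\<in>circle. cdist (frac s) t' < \<rho> \<longrightarrow> t' \<in> U"
    using assms unfolding copen_def by auto
  moreover have "cdist (frac s) (frac s') \<le> dist s' s" for s'
    using cdist_frac_le[of s s'] by (simp add: dist_real_def abs_minus_commute)
  ultimately show "\<exists>e>0. \<forall>s'. dist s' s < e \<longrightarrow> s' \<in> {s. frac s \<in> U}"
    by (metis frac_in_circle le_less_trans mem_Collect_eq)
qed

lemma copen_vimage:
  assumes "ccont f" "f \<in> circle \<rightarrow> circle" "copen U"
  shows "copen {t \<in> circle. f t \<in> U}"
  unfolding copen_def
proof (intro ballI)
  fix t assume t: "t \<in> {t \<in> circle. f t \<in> U}"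
  obtain \<rho> where "\<rho> > 0" and \<rho>: "\<forall>t'\<in>circle. cdist (f t) t' < \<rho> \<longrightarrow> t' \<in> U"
    using assms(3) t unfolding copen_def by auto
  obtain d where "d > 0" and d: "\<forall>t'\<in>circle. cdist t t' < d \<longrightarrow> cdist (f t) (f t') < \<rho>"
    using assms(1) t \<open>\<rho> > 0\<close> unfolding ccont_def by blast
  have "t' \<in> {t \<in> circle. f t \<in> U}" if "t' \<in> circle" "cdist t t' < d" for t'
    using that d \<rho> funcset_mem[OF assms(2)] by blast
  then show "\<exists>d>0. \<forall>t'\<in>circle. cdist t t' < d \<longrightarrow> t' \<in> {t \<in> circle. f t \<in> U}"
    using \<open>d > 0\<close> by blast
qed

definition arclen :: "real \<Rightarrow> real \<Rightarrow> real" where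
  "arclen a b = (if a \<le> b then b - a else 1 + b - a)"

lemma arclen_bounds: "a \<in> circle \<Longrightarrow> b \<in> circle \<Longrightarrow> a \<noteq> b \<Longrightarrow> 0 < arclen a b \<and> arclen a b < 1"
  by (auto simp: arclen_def circle_def)

lemma frac_add_arclen: "a \<in> circle \<Longrightarrow> b \<in> circle \<Longrightarrow> frac (a + arclen a b) = b"
  using frac_add_of_int_right[of b 1] by (auto simp: arclen_def frac_circle_id add.commute)

lemma frac_image_atLeastAtMost_translate:
  "frac ` {s..t} = frac ` {s - of_int k..t - of_int k}" for s t :: real
proof -
  have "{s..t} = (\<lambda>r. r + of_int k) ` {s - of_int k..t - of_int k}"
    by simp
  then show ?thesis by (simp add: image_image del: image_add_atLeastAtMost')
qed

lemma frac_image_greaterThanLessThan_translate: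
  "frac ` {s<..<t} = frac ` {s - of_int k<..<t - of_int k}" for s t :: real
proof -
  have "{s<..<t} = (\<lambda>r. r + of_int k) ` {s - of_int k<..<t - of_int k}"
    by (auto simp: image_iff intro!: bexI[of _ "_ - of_int k"])
  then show ?thesis by (simp add: image_image)
qed

lemma frac_image_eq_self: "A \<subseteq> {0..<1} \<Longrightarrow> frac ` A = A" for A :: "real set"
  by (auto simp: image_iff subset_iff)

lemma frac_image_eq_minus_one:
  fixes A :: "real set"
  assumes "A \<subseteq> {1..<2}"
  shows "frac ` A = (\<lambda>r. r - 1) ` A"
proof (rule image_cong[OF refl])
  fix r assume "r \<in> A"
  then show "frac r = r - 1" using assms frac_unique_iff[of r "r - 1"] by auto
qed

lemma carc_frac:
  assumes "s \<le> t" "t < s + 1"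
  shows "carc (frac s) (frac t) = frac ` {s..t}"
proof -
  define a where "a = frac s"
  define L where "L = t - s"
  have a: "0 \<le> a" "a < 1" by (simp_all add: a_def frac_lt_1)
  have L: "0 \<le> L" "L < 1" using assms by (simp_all add: L_def)
  have img: "frac ` {s..t} = frac ` {a..a + L}"
    using frac_image_atLeastAtMost_translate[of s t "\<lfloor>s\<rfloor>"] by (simp add: a_def L_def frac_def)
  have ft: "frac t = frac (a + L)"
    using frac_add_of_int_right[of "a + L" "\<lfloor>s\<rfloor>"] by (simp add: a_def L_def frac_def)
  show ?thesis
  proof (cases "a + L < 1")
    case True
    then show ?thesis using a L by (simp add: img ft frac_image_eq_self carc_def flip: a_def)
  next
    case False
    have "{a..a + L} = {a..<1} \<union> {1..a + L}"
      using False a by auto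
    then have "frac ` {a..a + L} = frac ` {a..<1} \<union> frac ` {1..a + L}"
      by (simp add: image_Un)
    also have "\<dots> = {a..<1} \<union> {0..a + L - 1}"
      using a L by (subst frac_image_eq_self frac_image_eq_minus_one; auto)+
    finally show ?thesis
      using False a L frac_unique_iff[of "a + L" "a + L - 1"] by (simp add: img ft carc_def flip: a_def)
  qed
qed

lemma oarc_frac:
  assumes "s < t" "t < s + 1"
  shows "oarc (frac s) (frac t) = frac ` {s<..<t}"
proof -
  define a where "a = frac s"
  define L where "L = t - s"
  have a: "0 \<le> a" "a < 1" by (simp_all add: a_def frac_lt_1)
  have L: "0 < L" "L < 1" using assms by (simp_all add: L_def)
  have img: "frac ` {s<..<t} = frac ` {a<..<a + L}"
    using frac_image_greaterThanLessThan_translate[of s t "\<lfloor>s\<rfloor>"] by (simp add: a_def L_def frac_def)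
  have ft: "frac t = frac (a + L)"
    using frac_add_of_int_right[of "a + L" "\<lfloor>s\<rfloor>"] by (simp add: a_def L_def frac_def)
  show ?thesis
  proof (cases "a + L < 1")
    case True
    then show ?thesis using a L by (simp add: img ft frac_image_eq_self oarc_def flip: a_def)
  next
    case False
    have "{a<..<a + L} = {a<..<1} \<union> {1..<a + L}"
      using False a by auto
    then have "frac ` {a<..<a + L} = frac ` {a<..<1} \<union> frac ` {1..<a + L}"
      by (simp add: image_Un)
    also have "\<dots> = {a<..<1} \<union> (\<lambda>r. r - 1) ` {1..<a + L}"
      using a L by (subst frac_image_eq_self frac_image_eq_minus_one; auto)+
    also have "\<dots> = {a<..<1} \<union> {0..<a + L - 1}"
      using image_add_atLeastLessThan'[of "-1" 1 "a + L"] by simp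
    finally show ?thesis
      using False a L frac_unique_iff[of "a + L" "a + L - 1"] by (simp add: img ft oarc_def flip: a_def)
  qed
qed

lemma carc_lift: "a \<in> circle \<Longrightarrow> b \<in> circle \<Longrightarrow> a \<noteq> b \<Longrightarrow> carc a b = frac ` {a..a + arclen a b}"
  using carc_frac[of a "a + arclen a b"] arclen_bounds[of a b] by (simp add: frac_add_arclen frac_circle_id)

lemma oarc_lift: "a \<in> circle \<Longrightarrow> b \<in> circle \<Longrightarrow> a \<noteq> b \<Longrightarrow> oarc a b = frac ` {a<..<a + arclen a b}"
  using oarc_frac[of a "a + arclen a b"] arclen_bounds[of a b] by (simp add: frac_add_arclen frac_circle_id)

lemma carc_subset_circle: "a \<in> circle \<Longrightarrow> b \<in> circle \<Longrightarrow> carc a b \<subseteq> circle"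
  by (auto simp: carc_def circle_def)

lemma carc_eq_oarc_Un: "a \<in> circle \<Longrightarrow> b \<in> circle \<Longrightarrow> a \<noteq> b \<Longrightarrow> carc a b = oarc a b \<union> {a, b}"
  by (auto simp: carc_def oarc_def circle_def)

lemma endpoints_notin_oarc: "a \<notin> oarc a b" "b \<notin> oarc a b"
  by (auto simp: oarc_def)

lemma oarc_disjoint: "a \<in> circle \<Longrightarrow> b \<in> circle \<Longrightarrow> a \<noteq> b \<Longrightarrow> oarc a b \<inter> oarc b a = {}"
  by (auto simp: oarc_def circle_def)

lemma oarc_Un_oarc: "a \<in> circle \<Longrightarrow> b \<in> circle \<Longrightarrow> a \<noteq> b \<Longrightarrow> oarc a b \<union> oarc b a = circle - {a, b}"
  by (auto simp: oarc_def circle_def)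

lemma oarc_nonempty: "a \<in> circle \<Longrightarrow> b \<in> circle \<Longrightarrow> a \<noteq> b \<Longrightarrow> oarc a b \<noteq> {}"
  using oarc_lift[of a b] arclen_bounds[of a b] by auto

lemma carc_neq_carc_swap:
  assumes "a \<in> circle" "b \<in> circle" "a \<noteq> b"
  shows "carc a b \<noteq> carc b a"
  using assms oarc_nonempty[OF assms] oarc_disjoint[OF assms] endpoints_notin_oarc
    carc_eq_oarc_Un[OF assms] carc_eq_oarc_Un[of b a] by blast

lemma copen_oarc:
  assumes a: "a \<in> circle" and b: "b \<in> circle" and ab: "a \<noteq> b"
  shows "copen (oarc a b)"
  unfolding copen_def
proof
  fix t assume "t \<in> oarc a b"
  then obtain s where s: "a < s" "s < a + arclen a b" "t = frac s"
    using oarc_lift[OF a b ab] by auto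
  define \<rho> where "\<rho> = min (s - a) (a + arclen a b - s)"
  have "t' \<in> oarc a b" if t': "t' \<in> circle" "cdist t t' < \<rho>" for t'
  proof -
    have "t \<in> circle" using s by simp
    then obtain d where d: "\<bar>d\<bar> = cdist t t'" "t' = frac (t + d)"
      using cdist_lift t'(1) by blast
    have "t' = frac (s + d)" using d s by (metis add.commute frac_add_simps(2))
    moreover have "s + d \<in> {a<..<a + arclen a b}" using d t' \<rho>_def s by auto
    ultimately show ?thesis using oarc_lift[OF a b ab] by auto
  qed
  moreover have "\<rho> > 0" using s \<rho>_def by auto
  ultimately show "\<exists>\<rho>>0. \<forall>t'\<in>circle. cdist t t' < \<rho> \<longrightarrow> t' \<in> oarc a b" by blast
qed

lemma carc_subset_ccball:
  assumes w: "w \<in> circle" and u: "u \<in> circle" and v: "v \<in> circle"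
    and "cdist w u \<le> \<rho>" "cdist w v \<le> \<rho>" "\<rho> < 1/2"
  shows "carc u v \<subseteq> ccball w \<rho> \<or> carc v u \<subseteq> ccball w \<rho>"
proof -
  have sub: "carc (frac (w + \<alpha>)) (frac (w + \<beta>)) \<subseteq> ccball w \<rho>"
    if "\<alpha> \<le> \<beta>" "\<bar>\<alpha>\<bar> \<le> \<rho>" "\<bar>\<beta>\<bar> \<le> \<rho>" for \<alpha> \<beta>
  proof -
    have "cdist w (frac r) \<le> \<rho>" if "r \<in> {w + \<alpha>..w + \<beta>}" for r
    proof -
      have "\<bar>w - r\<bar> \<le> \<rho>"
        using that \<open>\<bar>\<alpha>\<bar> \<le> \<rho>\<close> \<open>\<bar>\<beta>\<bar> \<le> \<rho>\<close> by (auto simp: abs_le_iff)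
      then show ?thesis using cdist_frac_le[of w r] by (simp add: frac_circle_id[OF w])
    qed
    moreover have "carc (frac (w + \<alpha>)) (frac (w + \<beta>)) = frac ` {w + \<alpha>..w + \<beta>}"
      using that \<open>\<rho> < 1/2\<close> by (intro carc_frac) auto
    ultimately show ?thesis by (auto simp: ccball_def)
  qed
  obtain \<alpha> where "\<bar>\<alpha>\<bar> = cdist w u" "u = frac (w + \<alpha>)" using cdist_lift[OF w u] .
  moreover obtain \<beta> where "\<bar>\<beta>\<bar> = cdist w v" "v = frac (w + \<beta>)" using cdist_lift[OF w v] .
  ultimately show ?thesis
    using sub[of \<alpha> \<beta>] sub[of \<beta> \<alpha>] assms by (cases "\<alpha> \<le> \<beta>") auto
qed

section \<open>Compactness and homeomorphisms of the circle\<close>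

lemma circle_seq_compact:
  fixes a :: "nat \<Rightarrow> real"
  assumes a: "\<And>n. a n \<in> circle"
  obtains l r where "l \<in> circle" "strict_mono r" "(\<lambda>n. cdist (a (r n)) l) \<longlonglongrightarrow> 0"
proof -
  have compact: "seq_compact {0..1::real}" by (rule compact_imp_seq_compact) simp
  have in_Icc: "\<forall>n. a n \<in> {0..1}" using a by (simp add: circle_def less_imp_le)
  obtain l r where l: "l \<in> {0..1}" "strict_mono r" "(a \<circ> r) \<longlonglongrightarrow> l"
    by (rule seq_compactE[OF compact in_Icc])
  have lim: "(\<lambda>n. \<bar>a (r n) - l\<bar>) \<longlonglongrightarrow> 0"
    using l(3) by (intro tendsto_rabs_zero) (simp add: LIM_zero o_def)
  have bound: "\<bar>cdist (a (r n)) (frac l)\<bar> \<le> \<bar>a (r n) - l\<bar>" for n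
    using cdist_frac_le[of "a (r n)" l] cdist_nonneg[OF a frac_in_circle] frac_circle_id[OF a] by simp
  have "(\<lambda>n. cdist (a (r n)) (frac l)) \<longlonglongrightarrow> 0"
    by (rule Lim_null_comparison[OF _ lim]) (simp add: bound always_eventually)
  then show thesis using that l(2) frac_in_circle by blast
qed

lemma circle_pairs_seq_compact:
  fixes U V :: "nat \<Rightarrow> real"
  assumes U: "\<And>n. U n \<in> circle" and V: "\<And>n. V n \<in> circle"
  obtains l1 l2 \<psi> where "l1 \<in> circle" "l2 \<in> circle" "strict_mono \<psi>"
    "(\<lambda>n. cdist (U (\<psi> n)) l1) \<longlonglongrightarrow> 0" "(\<lambda>n. cdist (V (\<psi> n)) l2) \<longlonglongrightarrow> 0"
proof -
  obtain l1 \<phi>1 where l1: "l1 \<in> circle" "strict_mono \<phi>1" "(\<lambda>n. cdist (U (\<phi>1 n)) l1) \<longlonglongrightarrow> 0"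
    using circle_seq_compact[of U, OF U] by blast
  obtain l2 \<phi>2 where l2: "l2 \<in> circle" "strict_mono \<phi>2" "(\<lambda>n. cdist (V (\<phi>1 (\<phi>2 n))) l2) \<longlonglongrightarrow> 0"
    using circle_seq_compact[of "\<lambda>n. V (\<phi>1 n)", OF V] by blast
  have "(\<lambda>n. cdist (U (\<phi>1 (\<phi>2 n))) l1) \<longlonglongrightarrow> 0"
    using LIMSEQ_subseq_LIMSEQ[OF l1(3) l2(2)] by (simp add: o_def)
  then show thesis
    using that[of l1 l2 "\<phi>1 \<circ> \<phi>2"] l1 l2 strict_mono_o[OF l1(2) l2(2)] by simp
qed

lemma circle_pairs_uniform:
  assumes mono: "\<And>u v \<delta> \<delta>'. P u v \<delta> \<Longrightarrow> 0 < \<delta>' \<Longrightarrow> \<delta>' \<le> \<delta> \<Longrightarrow> P u v \<delta>'"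
    and local: "\<And>u v. u \<in> circle \<Longrightarrow> v \<in> circle \<Longrightarrow>
      \<exists>\<delta>>0. \<forall>u'\<in>circle. \<forall>v'\<in>circle. cdist u u' < \<delta> \<longrightarrow> cdist v v' < \<delta> \<longrightarrow> P u' v' \<delta>"
  shows "\<exists>\<delta>>0. \<forall>u\<in>circle. \<forall>v\<in>circle. P u v \<delta>"
proof (rule ccontr)
  assume "\<not> ?thesis"
  then have contra: "\<forall>\<delta>>0. \<exists>u\<in>circle. \<exists>v\<in>circle. \<not> P u v \<delta>"
    by auto
  have "\<forall>n. \<exists>p. fst p \<in> circle \<and> snd p \<in> circle \<and> \<not> P (fst p) (snd p) (inverse (real (Suc n)))"
  proof
    fix n
    have "inverse (real (Suc n)) > 0" by simp
    then obtain u v where "u \<in> circle" "v \<in> circle" "\<not> P u v (inverse (real (Suc n)))"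
      using contra by meson
    then show "\<exists>p. fst p \<in> circle \<and> snd p \<in> circle \<and> \<not> P (fst p) (snd p) (inverse (real (Suc n)))"
      by (intro exI[of _ "(u, v)"]) simp
  qed
  from choice[OF this] obtain p where p: "\<forall>n. fst (p n) \<in> circle \<and> snd (p n) \<in> circle \<and>
      \<not> P (fst (p n)) (snd (p n)) (inverse (real (Suc n)))"
    by blast
  obtain l1 l2 \<psi> where l: "l1 \<in> circle" "l2 \<in> circle" "strict_mono \<psi>"
    "(\<lambda>n. cdist (fst (p (\<psi> n))) l1) \<longlonglongrightarrow> 0" "(\<lambda>n. cdist (snd (p (\<psi> n))) l2) \<longlonglongrightarrow> 0"
    using circle_pairs_seq_compact[of "\<lambda>n. fst (p n)" "\<lambda>n. snd (p n)"] p by blast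
  obtain \<delta> where "\<delta> > 0" and \<delta>: "\<forall>u'\<in>circle. \<forall>v'\<in>circle. cdist l1 u' < \<delta> \<longrightarrow> cdist l2 v' < \<delta> \<longrightarrow> P u' v' \<delta>"
    using local[OF l(1,2)] by blast
  have "\<forall>\<^sub>F n in sequentially. cdist (fst (p (\<psi> n))) l1 < \<delta>"
    using l(4) \<open>\<delta> > 0\<close> by (rule order_tendstoD(2))
  moreover have "\<forall>\<^sub>F n in sequentially. cdist (snd (p (\<psi> n))) l2 < \<delta>"
    using l(5) \<open>\<delta> > 0\<close> by (rule order_tendstoD(2))
  moreover have "(\<lambda>n. inverse (real (Suc (\<psi> n)))) \<longlonglongrightarrow> 0"
    using LIMSEQ_subseq_LIMSEQ[OF LIMSEQ_inverse_real_of_nat l(3)] by (simp add: o_def)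
  then have "\<forall>\<^sub>F n in sequentially. inverse (real (Suc (\<psi> n))) < \<delta>"
    using \<open>\<delta> > 0\<close> by (rule order_tendstoD(2))
  ultimately have "\<forall>\<^sub>F n in sequentially. cdist (fst (p (\<psi> n))) l1 < \<delta> \<and> cdist (snd (p (\<psi> n))) l2 < \<delta>
      \<and> inverse (real (Suc (\<psi> n))) < \<delta>"
    by (simp add: eventually_conj_iff)
  then obtain n where n: "cdist (fst (p (\<psi> n))) l1 < \<delta>" "cdist (snd (p (\<psi> n))) l2 < \<delta>"
    "inverse (real (Suc (\<psi> n))) < \<delta>"
    using eventually_happens'[OF sequentially_bot] by blast
  have "P (fst (p (\<psi> n))) (snd (p (\<psi> n))) \<delta>"
    using \<delta> p n(1,2) cdist_commute by metis
  then have "P (fst (p (\<psi> n))) (snd (p (\<psi> n))) (inverse (real (Suc (\<psi> n))))"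
    using n(3) mono by force
  then show False using p by blast
qed

corollary circle_uniform:
  assumes "\<And>u \<delta> \<delta>'. P u \<delta> \<Longrightarrow> 0 < \<delta>' \<Longrightarrow> \<delta>' \<le> \<delta> \<Longrightarrow> P u \<delta>'"
    and "\<And>u. u \<in> circle \<Longrightarrow> \<exists>\<delta>>0. \<forall>u'\<in>circle. cdist u u' < \<delta> \<longrightarrow> P u' \<delta>"
  shows "\<exists>\<delta>>0. \<forall>u\<in>circle. P u \<delta>"
proof -
  have "\<exists>\<delta>>0. \<forall>u\<in>circle. \<forall>v\<in>circle. P u \<delta>"
    using assms by (intro circle_pairs_uniform[of "\<lambda>u v. P u"]) blast+
  moreover have "(0::real) \<in> circle" by (simp add: circle_def)
  ultimately show ?thesis by blast
qed

definition uccont :: "(real \<Rightarrow> real) \<Rightarrow> bool" where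
  "uccont f \<longleftrightarrow> (\<forall>e>0. \<exists>d>0. \<forall>a\<in>circle. \<forall>b\<in>circle. cdist a b < d \<longrightarrow> cdist (f a) (f b) < e)"

lemma ccont_imp_uccont:
  assumes f: "ccont f" "f \<in> circle \<rightarrow> circle"
  shows "uccont f"
  unfolding uccont_def
proof (intro allI impI)
  fix e :: real assume "e > 0"
  let ?P = "\<lambda>a \<delta>. \<forall>b\<in>circle. cdist a b < \<delta> \<longrightarrow> cdist (f a) (f b) < e"
  have "\<exists>\<delta>>0. \<forall>a\<in>circle. ?P a \<delta>"
  proof (rule circle_uniform)
    show "?P a \<delta>'" if "?P a \<delta>" "0 < \<delta>'" "\<delta>' \<le> \<delta>" for a \<delta> \<delta>'
      using that by force
    fix u assume u: "u \<in> circle"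
    obtain d where "d > 0" and d: "\<forall>y\<in>circle. cdist u y < d \<longrightarrow> cdist (f u) (f y) < e/2"
      using f(1) u \<open>e > 0\<close> unfolding ccont_def by (meson half_gt_zero)
    have "?P a (d/2)" if a: "a \<in> circle" "cdist u a < d/2" for a
    proof (intro ballI impI)
      fix b assume b: "b \<in> circle" "cdist a b < d/2"
      have "cdist u b < d" using cdist_triangle[OF u a(1) b(1)] a b by linarith
      then have "cdist (f u) (f b) < e/2" using d b by blast
      moreover have "cdist u a < d" using a(2) \<open>d > 0\<close> by linarith
      then have "cdist (f a) (f u) < e/2"
        using d a(1) cdist_commute by metis
      moreover have "cdist (f a) (f b) \<le> cdist (f a) (f u) + cdist (f u) (f b)"
        using f(2) u a b by (intro cdist_triangle) auto
      ultimately show "cdist (f a) (f b) < e" by linarith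
    qed
    then show "\<exists>\<delta>>0. \<forall>a\<in>circle. cdist u a < \<delta> \<longrightarrow> ?P a \<delta>"
      using \<open>d > 0\<close> by (intro exI[of _ "d/2"]) auto
  qed
  then show "\<exists>d>0. \<forall>a\<in>circle. \<forall>b\<in>circle. cdist a b < d \<longrightarrow> cdist (f a) (f b) < e"
    by blast
qed

lemma uccont_comp:
  assumes "uccont f" "uccont g" "g \<in> circle \<rightarrow> circle"
  shows "uccont (\<lambda>x. f (g x))"
  unfolding uccont_def
proof (intro allI impI)
  fix e :: real assume "e > 0"
  then obtain d where "d > 0" "\<forall>a\<in>circle. \<forall>b\<in>circle. cdist a b < d \<longrightarrow> cdist (f a) (f b) < e"
    using assms(1) unfolding uccont_def by blast
  moreover obtain d' where "d' > 0" "\<forall>a\<in>circle. \<forall>b\<in>circle. cdist a b < d' \<longrightarrow> cdist (g a) (g b) < d"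
    using assms(2) \<open>d > 0\<close> unfolding uccont_def by blast
  ultimately show "\<exists>d>0. \<forall>a\<in>circle. \<forall>b\<in>circle. cdist a b < d \<longrightarrow> cdist (f (g a)) (f (g b)) < e"
    using assms(3) by (metis funcset_mem)
qed

lemma uccont_imp_ccont: "uccont f \<Longrightarrow> ccont f"
  unfolding uccont_def ccont_def by blast

lemma HomS1_funcset: "f \<in> HomS1 \<Longrightarrow> f \<in> circle \<rightarrow> circle"
  by (auto simp: HomS1_def bij_betw_def)

lemma HomS1_bij_betw: "f \<in> HomS1 \<Longrightarrow> bij_betw f circle circle"
  by (simp add: HomS1_def)

lemma HomS1_ccont: "f \<in> HomS1 \<Longrightarrow> ccont f"
  by (simp add: HomS1_def)

lemma HomS1_uccont: "f \<in> HomS1 \<Longrightarrow> uccont f"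
  by (rule ccont_imp_uccont[OF HomS1_ccont HomS1_funcset])

text \<open>The image of an open arc is connected, so it stays on one side of the two image endpoints.\<close>

lemma image_oarc_subset:
  assumes f: "f \<in> circle \<rightarrow> circle" "inj_on f circle" "ccont f"
    and a: "a \<in> circle" and b: "b \<in> circle" and ab: "a \<noteq> b"
  shows "f ` oarc a b \<subseteq> oarc (f a) (f b) \<or> f ` oarc a b \<subseteq> oarc (f b) (f a)"
proof -
  have fa: "f a \<in> circle" and fb: "f b \<in> circle" using f a b by auto
  have fab: "f a \<noteq> f b" using f(2) a b ab by (meson inj_on_contraD)
  define I where "I = {a<..<a + arclen a b}"
  define U1 where "U1 = {s. frac s \<in> {t \<in> circle. f t \<in> oarc (f a) (f b)}}"
  define U2 where "U2 = {s. frac s \<in> {t \<in> circle. f t \<in> oarc (f b) (f a)}}"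
  have oarc_I: "oarc a b = frac ` I" using oarc_lift[OF a b ab] by (simp add: I_def)
  have img: "f t \<in> oarc (f a) (f b) \<union> oarc (f b) (f a)" if t: "t \<in> oarc a b" for t
  proof -
    have "t \<in> circle" using t oarc_I by auto
    moreover have "t \<noteq> a" "t \<noteq> b" using t endpoints_notin_oarc by blast+
    ultimately have "f t \<in> circle" "f t \<noteq> f a" "f t \<noteq> f b" using f a b by (auto dest: inj_onD)
    then show ?thesis using oarc_Un_oarc[OF fa fb fab] by blast
  qed
  have "U1 \<inter> I = {} \<or> U2 \<inter> I = {}"
  proof (rule connectedD)
    show "open U1" unfolding U1_def
      by (rule open_frac_vimage[OF copen_vimage[OF f(3) f(1) copen_oarc[OF fa fb fab]]])
    show "open U2" unfolding U2_def
      by (rule open_frac_vimage[OF copen_vimage[OF f(3) f(1) copen_oarc[OF fb fa fab[symmetric]]]])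
    show "U1 \<inter> U2 \<inter> I = {}" using oarc_disjoint[OF fa fb fab] by (auto simp: U1_def U2_def)
    show "I \<subseteq> U1 \<union> U2" using img oarc_I by (auto simp: U1_def U2_def)
  qed (simp add: I_def)
  then show ?thesis using img oarc_I by (auto simp: U1_def U2_def)
qed

lemma image_carc:
  assumes f: "f \<in> circle \<rightarrow> circle" "bij_betw f circle circle" "ccont f"
    and a: "a \<in> circle" and b: "b \<in> circle" and ab: "a \<noteq> b"
  shows "f ` carc a b = carc (f a) (f b) \<or> f ` carc a b = carc (f b) (f a)"
proof -
  have inj: "inj_on f circle" using f(2) by (rule bij_betw_imp_inj_on)
  have fa: "f a \<in> circle" and fb: "f b \<in> circle" and fab: "f a \<noteq> f b"
    using f(1) inj a b ab by (auto dest: inj_onD)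
  have "f ` oarc a b \<union> f ` oarc b a = f ` (circle - {a, b})"
    using oarc_Un_oarc[OF a b ab] by (metis image_Un)
  also have "\<dots> = circle - {f a, f b}"
    using inj a b f(2) by (simp add: inj_on_image_set_diff bij_betw_def)
  finally have "f ` oarc a b \<union> f ` oarc b a = oarc (f a) (f b) \<union> oarc (f b) (f a)"
    using oarc_Un_oarc[OF fa fb fab] by simp
  moreover have "P = O1"
    if "P \<union> Q = O1 \<union> O2" "O1 \<inter> O2 = {}" "O2 \<noteq> {}" "P \<subseteq> O1" "Q \<subseteq> O1 \<or> Q \<subseteq> O2"
    for P Q O1 O2 :: "real set"
    using that by blast
  ultimately have "f ` oarc a b = oarc (f a) (f b) \<or> f ` oarc a b = oarc (f b) (f a)"
    using image_oarc_subset[OF f(1) inj f(3) a b ab] image_oarc_subset[OF f(1) inj f(3) b a ab[symmetric]]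
      oarc_disjoint[OF fa fb fab] oarc_nonempty[OF fa fb fab] oarc_nonempty[OF fb fa fab[symmetric]]
    by (metis Int_commute sup_commute)
  then show ?thesis
    using carc_eq_oarc_Un[OF a b ab] carc_eq_oarc_Un[OF fa fb fab] carc_eq_oarc_Un[OF fb fa fab[symmetric]]
    by auto
qed

section \<open>Contraction along the random walk\<close>

definition shift_seq :: "nat \<Rightarrow> (nat \<Rightarrow> 'a) \<Rightarrow> nat \<Rightarrow> 'a" where
  "shift_seq T \<omega> = (\<lambda>i. \<omega> (i + T))"

lemma shift_seq_funcset: "\<omega> \<in> UNIV \<rightarrow> HomS1 \<Longrightarrow> shift_seq T \<omega> \<in> UNIV \<rightarrow> HomS1"
  by (auto simp: shift_seq_def)

lemma itc_add: "itc \<omega> (T + n) x = itc (shift_seq T \<omega>) n (itc \<omega> T x)"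
  by (induction n) (simp_all add: shift_seq_def add.commute)

lemma itc_cong: "(\<And>i. i < n \<Longrightarrow> \<omega> i = \<omega>' i) \<Longrightarrow> itc \<omega> n x = itc \<omega>' n x"
  by (induction n) auto

lemma itc_Suc_eq_comp: "itc \<omega> (Suc n) = \<omega> n \<circ> itc \<omega> n"
  by (simp add: fun_eq_iff)

lemma itc_in_circle: "\<omega> \<in> UNIV \<rightarrow> HomS1 \<Longrightarrow> a \<in> circle \<Longrightarrow> itc \<omega> n a \<in> circle"
  by (induction n) (auto dest!: HomS1_funcset)

lemma itc_funcset: "\<omega> \<in> UNIV \<rightarrow> HomS1 \<Longrightarrow> itc \<omega> n \<in> circle \<rightarrow> circle"
  by (simp add: itc_in_circle)

lemma itc_bij_betw: "\<omega> \<in> UNIV \<rightarrow> HomS1 \<Longrightarrow> bij_betw (itc \<omega> n) circle circle"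
proof (induction n)
  case (Suc n)
  then show ?case
    unfolding itc_Suc_eq_comp by (blast intro: bij_betw_trans HomS1_bij_betw)
qed (simp add: bij_betw_def inj_on_def)

lemma itc_inj_on: "\<omega> \<in> UNIV \<rightarrow> HomS1 \<Longrightarrow> inj_on (itc \<omega> n) circle"
  using itc_bij_betw bij_betw_imp_inj_on by blast

lemma itc_uccont: "\<omega> \<in> UNIV \<rightarrow> HomS1 \<Longrightarrow> uccont (itc \<omega> n)"
proof (induction n)
  case 0
  then show ?case by (auto simp: uccont_def)
next
  case (Suc n)
  then show ?case
    using uccont_comp[OF HomS1_uccont[of "\<omega> n"] _ itc_funcset] by auto
qed

lemma itc_image_carc:
  assumes \<omega>: "\<omega> \<in> UNIV \<rightarrow> HomS1" and "x \<in> circle" "y \<in> circle" "x \<noteq> y"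
  shows "itc \<omega> n ` carc x y = carc (itc \<omega> n x) (itc \<omega> n y) \<or>
         itc \<omega> n ` carc x y = carc (itc \<omega> n y) (itc \<omega> n x)"
  using assms by (intro image_carc itc_funcset itc_bij_betw uccont_imp_ccont itc_uccont)

lemma itc_image_carc_cases:
  assumes \<omega>: "\<omega> \<in> UNIV \<rightarrow> HomS1" and x: "x \<in> circle" and y: "y \<in> circle" and xy: "x \<noteq> y"
    and A: "A = carc (itc \<omega> n x) (itc \<omega> n y) \<or> A = carc (itc \<omega> n y) (itc \<omega> n x)"
  shows "itc \<omega> n ` carc x y = A \<or> itc \<omega> n ` carc y x = A"
proof -
  let ?u = "itc \<omega> n x" and ?v = "itc \<omega> n y"
  have "?u \<in> circle" "?v \<in> circle" "?u \<noteq> ?v"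
    using itc_in_circle[OF \<omega>] itc_inj_on[OF \<omega>] x y xy by (auto dest: inj_onD)
  then have "carc ?u ?v \<noteq> carc ?v ?u" by (rule carc_neq_carc_swap)
  moreover have "itc \<omega> n ` carc x y \<noteq> itc \<omega> n ` carc y x"
    using carc_neq_carc_swap[OF x y xy] inj_on_image_eq_iff[OF itc_inj_on[OF \<omega>]]
      carc_subset_circle x y by metis
  ultimately show ?thesis
    using itc_image_carc[OF \<omega> x y xy] itc_image_carc[OF \<omega> y x xy[symmetric]] A by metis
qed

definition near_pair :: "real set \<Rightarrow> nat \<Rightarrow> real \<Rightarrow> real \<Rightarrow> bool" where
  "near_pair S k a b \<longleftrightarrow> a \<in> circle \<and> b \<in> circle \<and>
     (\<exists>z\<in>S. cdist z a < 1 / (real k + 1) \<and> cdist z b < 1 / (real k + 1))"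

definition contracting_near :: "real \<Rightarrow> (nat \<Rightarrow> real \<Rightarrow> real) \<Rightarrow> real set \<Rightarrow> bool" where
  "contracting_near q \<omega> S \<longleftrightarrow> (\<exists>C::nat. \<exists>k. \<forall>a b. near_pair S k a b \<longrightarrow>
      (\<forall>n. cdist (itc \<omega> n a) (itc \<omega> n b) \<le> real C * q ^ n))"

text \<open>Testing rational points only makes this a countable combination of measurable conditions on
  \<open>\<omega>\<close>; by continuity it is no weaker (\<open>contracting_near_rat_imp_contracting_near\<close>).\<close>

definition contracting_near_rat :: "real \<Rightarrow> (nat \<Rightarrow> real \<Rightarrow> real) \<Rightarrow> real set \<Rightarrow> bool" where
  "contracting_near_rat q \<omega> S \<longleftrightarrow> (\<exists>C::nat. \<exists>k. \<forall>a b::rat. near_pair S k (of_rat a) (of_rat b) \<longrightarrow>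
      (\<forall>n. cdist (itc \<omega> n (of_rat a)) (itc \<omega> n (of_rat b)) \<le> real C * q ^ n))"

lemma contracting_near_mono: "contracting_near q \<omega> S' \<Longrightarrow> S \<subseteq> S' \<Longrightarrow> contracting_near q \<omega> S"
  unfolding contracting_near_def near_pair_def by (meson subsetD)

lemma contracting_near_rat_mono:
  "contracting_near_rat q \<omega> S' \<Longrightarrow> S \<subseteq> S' \<Longrightarrow> contracting_near_rat q \<omega> S"
  unfolding contracting_near_rat_def near_pair_def by (meson subsetD)

lemma contracting_near_imp_rat: "contracting_near q \<omega> S \<Longrightarrow> contracting_near_rat q \<omega> S"
  unfolding contracting_near_def contracting_near_rat_def by blast

lemma rat_dense_circle:
  assumes "a \<in> circle" "e > 0"
  obtains r :: rat where "of_rat r \<in> circle" "cdist a (of_rat r) < e"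
proof -
  have "a < min (a + e) 1" using assms by (simp add: circle_def)
  then obtain r where "r \<in> \<rat>" "a < r" "r < min (a + e) 1" using Rats_dense_in_real by blast
  moreover obtain r' where "r = of_rat r'" using \<open>r \<in> \<rat>\<close> Rats_cases by blast
  moreover have "cdist a r \<le> \<bar>a - r\<bar>" by (rule cdist_le_abs)
  ultimately show thesis using assms by (intro that[of r']) (auto simp: circle_def simp del: zero_le_of_rat_iff of_rat_less_1_iff)
qed

lemma contracting_near_rat_imp_contracting_near:
  assumes \<omega>: "\<omega> \<in> UNIV \<rightarrow> HomS1" and "contracting_near_rat q \<omega> S" and S: "S \<subseteq> circle"
  shows "contracting_near q \<omega> S"
proof -
  obtain C k where Ck: "\<forall>a b::rat. near_pair S k (of_rat a) (of_rat b) \<longrightarrow>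
      (\<forall>n. cdist (itc \<omega> n (of_rat a)) (itc \<omega> n (of_rat b)) \<le> real C * q ^ n)"
    using assms(2) unfolding contracting_near_rat_def by blast
  have "cdist (itc \<omega> n a) (itc \<omega> n b) \<le> real C * q ^ n" if ab: "near_pair S k a b" for a b n
  proof (rule field_le_epsilon)
    fix e :: real assume "e > 0"
    let ?F = "itc \<omega> n" and ?\<rho> = "1 / (real k + 1)"
    obtain z where z: "z \<in> S" "cdist z a < ?\<rho>" "cdist z b < ?\<rho>" and a: "a \<in> circle" and b: "b \<in> circle"
      using ab unfolding near_pair_def by blast
    obtain d where "d > 0" and d: "\<forall>a\<in>circle. \<forall>b\<in>circle. cdist a b < d \<longrightarrow> cdist (?F a) (?F b) < e/2"
      using itc_uccont[OF \<omega>, of n] \<open>e > 0\<close> unfolding uccont_def by (meson half_gt_zero)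
    define \<sigma> where "\<sigma> = min d (min (?\<rho> - cdist z a) (?\<rho> - cdist z b))"
    have "\<sigma> > 0" using \<open>d > 0\<close> z by (simp add: \<sigma>_def)
    obtain ra where ra: "of_rat ra \<in> circle" "cdist a (of_rat ra) < \<sigma>" using rat_dense_circle[OF a \<open>\<sigma> > 0\<close>] .
    obtain rb where rb: "of_rat rb \<in> circle" "cdist b (of_rat rb) < \<sigma>" using rat_dense_circle[OF b \<open>\<sigma> > 0\<close>] .
    have zc: "z \<in> circle" using z(1) S by blast
    have "near_pair S k (of_rat ra) (of_rat rb)"
      unfolding near_pair_def using ra rb z cdist_triangle[OF zc a ra(1)] cdist_triangle[OF zc b rb(1)]
      by (auto simp: \<sigma>_def intro!: bexI[of _ z])
    then have "cdist (?F (of_rat ra)) (?F (of_rat rb)) \<le> real C * q ^ n" using Ck by blast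
    moreover have "cdist (?F a) (?F (of_rat ra)) < e/2" "cdist (?F (of_rat rb)) (?F b) < e/2"
      using d a b ra rb by (auto simp: \<sigma>_def cdist_commute[of "?F (of_rat rb)"])
    moreover have "cdist (?F a) (?F b) \<le>
        cdist (?F a) (?F (of_rat ra)) + cdist (?F (of_rat ra)) (?F (of_rat rb)) + cdist (?F (of_rat rb)) (?F b)"
      using cdist_triangle itc_in_circle[OF \<omega>] a b ra(1) rb(1) by (smt (verit))
    ultimately show "cdist (?F a) (?F b) \<le> real C * q ^ n + e" by linarith
  qed
  then show ?thesis unfolding contracting_near_def by blast
qed

lemma near_pair_image:
  assumes f: "uccont f" "f \<in> circle \<rightarrow> circle" and S: "S \<subseteq> circle"
  obtains k' where "\<And>a b. near_pair S k' a b \<Longrightarrow> near_pair (f ` S) k (f a) (f b)"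
proof -
  have "1 / (real k + 1) > 0" by simp
  then obtain d where "d > 0" and d: "\<forall>a\<in>circle. \<forall>b\<in>circle. cdist a b < d \<longrightarrow>
      cdist (f a) (f b) < 1 / (real k + 1)"
    using f(1) unfolding uccont_def by blast
  obtain k' where "inverse (real (Suc k')) < d" using reals_Archimedean[OF \<open>d > 0\<close>] by blast
  then have k': "1 / (real k' + 1) < d" by (simp add: inverse_eq_divide add.commute)
  have "near_pair (f ` S) k (f a) (f b)" if near: "near_pair S k' a b" for a b
  proof -
    obtain z where z: "z \<in> S" "cdist z a < 1 / (real k' + 1)" "cdist z b < 1 / (real k' + 1)"
      and a: "a \<in> circle" and b: "b \<in> circle" using near unfolding near_pair_def by blast
    have zc: "z \<in> circle" using z(1) S by blast
    have "cdist (f z) (f a) < 1 / (real k + 1)" using d zc a z(2) k' by simp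
    moreover have "cdist (f z) (f b) < 1 / (real k + 1)" using d zc b z(3) k' by simp
    ultimately show ?thesis
      unfolding near_pair_def using z(1) a b f(2) by blast
  qed
  then show thesis by (rule that)
qed

text \<open>The first \<open>T\<close> steps are absorbed into the constant, as \<open>cdist \<le> 1/2\<close>.\<close>

lemma contracting_near_shift_seq:
  assumes \<omega>: "\<omega> \<in> UNIV \<rightarrow> HomS1" and q: "0 < q" "q < 1" and A: "A \<subseteq> circle"
    and contr: "contracting_near q (shift_seq T \<omega>) (itc \<omega> T ` A)"
  shows "contracting_near q \<omega> A"
proof -
  obtain C k where Ck: "\<forall>a b. near_pair (itc \<omega> T ` A) k a b \<longrightarrow>
      (\<forall>n. cdist (itc (shift_seq T \<omega>) n a) (itc (shift_seq T \<omega>) n b) \<le> real C * q ^ n)"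
    using contr unfolding contracting_near_def by blast
  obtain k' where k': "\<And>a b. near_pair A k' a b \<Longrightarrow> near_pair (itc \<omega> T ` A) k (itc \<omega> T a) (itc \<omega> T b)"
    using near_pair_image[OF itc_uccont[OF \<omega>] itc_funcset[OF \<omega>] A] by blast
  define C' where "C' = nat \<lceil>(real C + 1) / q ^ T\<rceil>"
  have C': "real C' * q ^ m \<ge> (real C + 1) * q ^ m / q ^ T" for m
  proof -
    have "real C' \<ge> (real C + 1) / q ^ T" unfolding C'_def by linarith
    then show ?thesis using q by (simp add: divide_le_eq mult.commute mult_right_mono)
  qed
  have "cdist (itc \<omega> m a) (itc \<omega> m b) \<le> real C' * q ^ m" if ab: "near_pair A k' a b" for a b m
  proof (cases "T \<le> m")
    case True
    then obtain n where m: "m = T + n" using le_Suc_ex by blast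
    have "cdist (itc (shift_seq T \<omega>) n (itc \<omega> T a)) (itc (shift_seq T \<omega>) n (itc \<omega> T b)) \<le> real C * q ^ n"
      using Ck k'[OF ab] by blast
    then have "cdist (itc \<omega> m a) (itc \<omega> m b) \<le> real C * q ^ n"
      by (simp add: m itc_add)
    also have "\<dots> \<le> (real C + 1) * q ^ m / q ^ T"
      using q m by (simp add: power_add field_simps)
    finally show ?thesis using C'[of m] by simp
  next
    case False
    then have "q ^ T \<le> q ^ m" using q by (intro power_decreasing) auto
    also have "\<dots> \<le> (real C + 1) * q ^ m" using q by simp
    finally have "1 \<le> (real C + 1) * q ^ m / q ^ T" using q by simp
    then show ?thesis using C'[of m] cdist_le_half[of "itc \<omega> m a" "itc \<omega> m b"] by linarith
  qed
  then show ?thesis unfolding contracting_near_def by blast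
qed

lemma contracting_near_rat_transfer:
  assumes \<omega>: "\<omega> \<in> UNIV \<rightarrow> HomS1" and q: "0 < q" "q < 1"
    and x: "x \<in> circle" and y: "y \<in> circle" and xy: "x \<noteq> y"
    and w: "w \<in> circle" and r: "r < 1/2"
    and close: "cdist w (itc \<omega> T x) \<le> r" "cdist w (itc \<omega> T y) \<le> r"
    and contr: "contracting_near_rat q (shift_seq T \<omega>) (ccball w r)"
  shows "contracting_near_rat q \<omega> (carc x y) \<or> contracting_near_rat q \<omega> (carc y x)"
proof -
  have u: "itc \<omega> T x \<in> circle" and v: "itc \<omega> T y \<in> circle"
    using itc_in_circle[OF \<omega>] x y by auto
  obtain A where A: "A = carc (itc \<omega> T x) (itc \<omega> T y) \<or> A = carc (itc \<omega> T y) (itc \<omega> T x)"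
    and sub: "A \<subseteq> ccball w r"
    using carc_subset_ccball[OF w u v close r] by blast
  have "contracting_near q (shift_seq T \<omega>) (ccball w r)"
    using contracting_near_rat_imp_contracting_near[OF shift_seq_funcset[OF \<omega>] contr]
    by (simp add: ccball_def)
  then have contr_A: "contracting_near q (shift_seq T \<omega>) A"
    using sub by (rule contracting_near_mono)
  from itc_image_carc_cases[OF \<omega> x y xy A] show ?thesis
  proof
    assume "itc \<omega> T ` carc x y = A"
    then have "contracting_near q \<omega> (carc x y)"
      using contracting_near_shift_seq[OF \<omega> q carc_subset_circle[OF x y], of T] contr_A by simp
    then show ?thesis by (simp add: contracting_near_imp_rat)
  next
    assume "itc \<omega> T ` carc y x = A"
    then have "contracting_near q \<omega> (carc y x)"
      using contracting_near_shift_seq[OF \<omega> q carc_subset_circle[OF y x], of T] contr_A by simp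
    then show ?thesis by (simp add: contracting_near_imp_rat)
  qed
qed

lemma cdist_le_cdiam: "a \<in> A \<Longrightarrow> b \<in> A \<Longrightarrow> cdist a b \<le> cdiam A"
  unfolding cdiam_def by (rule cSup_upper) (auto intro: bdd_aboveI[of _ "1/2"] cdist_le_half)

lemma cdiam_le:
  assumes "A \<noteq> {}" "\<And>a b. a \<in> A \<Longrightarrow> b \<in> A \<Longrightarrow> cdist a b \<le> B"
  shows "cdiam A \<le> B"
  unfolding cdiam_def
proof (rule cSup_least)
  show "{cdist a b |a b. a \<in> A \<and> b \<in> A} \<noteq> {}" using assms(1) by blast
qed (use assms(2) in blast)

lemma cdist_chain_bound:
  fixes g :: "real \<Rightarrow> real"
  assumes g: "g ` {a..b} \<subseteq> circle" and "h > 0"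
    and step: "\<And>s s'. s \<in> {a..b} \<Longrightarrow> s' \<in> {a..b} \<Longrightarrow> \<bar>s - s'\<bar> \<le> h \<Longrightarrow> cdist (g s) (g s') \<le> B"
    and s: "s \<in> {a..b}"
  shows "cdist (g a) (g s) \<le> real (nat \<lceil>(b - a) / h\<rceil>) * B"
proof -
  have ga: "g a \<in> circle" using g s by auto
  have "0 \<le> B" using step[of a a] s \<open>h > 0\<close> by simp
  have chain: "\<forall>s\<in>{a..b}. s \<le> a + real i * h \<longrightarrow> cdist (g a) (g s) \<le> real i * B" for i
  proof (induction i)
    case 0
    then show ?case by auto
  next
    case (Suc i)
    show ?case
    proof (intro ballI impI)
      fix s assume s: "s \<in> {a..b}" and "s \<le> a + real (Suc i) * h"
      show "cdist (g a) (g s) \<le> real (Suc i) * B"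
      proof (cases "s \<le> a + real i * h")
        case True
        then have "cdist (g a) (g s) \<le> real i * B" using Suc.IH s by blast
        moreover have "real i * B \<le> real (Suc i) * B" using \<open>0 \<le> B\<close> by (simp add: mult_right_mono)
        ultimately show ?thesis by linarith
      next
        case False
        define s' where "s' = a + real i * h"
        have s': "s' \<in> {a..b}" "s' \<le> a + real i * h" "\<bar>s' - s\<bar> \<le> h"
          using False s \<open>h > 0\<close> \<open>s \<le> a + real (Suc i) * h\<close> by (auto simp: s'_def algebra_simps)
        have "cdist (g a) (g s) \<le> cdist (g a) (g s') + cdist (g s') (g s)"
          using g s s' by (intro cdist_triangle) auto
        also have "\<dots> \<le> real i * B + B"
          using Suc.IH s'(1,2) step[OF s'(1) s s'(3)] by (simp add: add_mono)
        finally show ?thesis by (simp add: algebra_simps)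
      qed
    qed
  qed
  have "(b - a) / h \<le> real (nat \<lceil>(b - a) / h\<rceil>)" by (rule real_nat_ceiling_ge)
  then have "b \<le> a + real (nat \<lceil>(b - a) / h\<rceil>) * h"
    using \<open>h > 0\<close> by (simp add: pos_divide_le_eq)
  then show ?thesis using chain s by auto
qed

lemma limsup_ln_le_ln:
  fixes D :: "nat \<Rightarrow> real"
  assumes pos: "\<And>n. D n > 0" and q: "0 < q" and bd: "\<And>n. D n \<le> K * q ^ n"
  shows "limsup (\<lambda>n. ereal (ln (D n) / real n)) \<le> ereal (ln q)"
proof -
  have K: "K > 0" using pos[of 0] bd[of 0] by simp
  have "\<forall>\<^sub>F n in sequentially. ereal (ln (D n) / real n) \<le> ereal (ln K / real n + ln q)"
    unfolding eventually_sequentially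
  proof (intro exI[of _ 1] allI impI)
    fix n :: nat assume n: "n \<ge> 1"
    have "ln (D n) \<le> ln (K * q ^ n)" using pos[of n] bd[of n] by simp
    also have "\<dots> = ln K + real n * ln q" using K q by (simp add: ln_mult ln_realpow)
    finally have "ln (D n) / real n \<le> (ln K + real n * ln q) / real n"
      using n by (simp add: divide_right_mono)
    also have "\<dots> = ln K / real n + ln q" using n by (simp add: field_simps)
    finally show "ereal (ln (D n) / real n) \<le> ereal (ln K / real n + ln q)" by simp
  qed
  then have "limsup (\<lambda>n. ereal (ln (D n) / real n)) \<le> limsup (\<lambda>n. ereal (ln K / real n + ln q))"
    by (rule Limsup_mono)
  also have "\<dots> = ereal (ln q)"
  proof (rule lim_imp_Limsup)
    have "(\<lambda>n. ln K / real n + ln q) \<longlonglongrightarrow> 0 + ln q"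
      by (intro tendsto_add lim_const_over_n tendsto_const)
    then show "(\<lambda>n. ereal (ln K / real n + ln q)) \<longlonglongrightarrow> ereal (ln q)" by simp
  qed simp
  finally show ?thesis .
qed

lemma cdiam_itc_carc_pos:
  assumes \<omega>: "\<omega> \<in> UNIV \<rightarrow> HomS1" and x: "x \<in> circle" and y: "y \<in> circle" and xy: "x \<noteq> y"
  shows "cdiam (itc \<omega> n ` carc x y) > 0"
proof -
  have "0 < cdist (itc \<omega> n x) (itc \<omega> n y)"
    using itc_in_circle[OF \<omega>] itc_inj_on[OF \<omega>] x y xy by (auto intro!: cdist_pos dest: inj_onD)
  also have "\<dots> \<le> cdiam (itc \<omega> n ` carc x y)"
    using carc_eq_oarc_Un[OF x y xy] by (intro cdist_le_cdiam) auto
  finally show ?thesis .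
qed

text \<open>Cut the arc into pieces shorter than the distance up to which pairs are controlled.\<close>

lemma cdiam_itc_carc_le:
  assumes \<omega>: "\<omega> \<in> UNIV \<rightarrow> HomS1" and x: "x \<in> circle" and y: "y \<in> circle" and xy: "x \<noteq> y"
    and near: "\<And>a b n. near_pair (carc x y) k a b \<Longrightarrow> cdist (itc \<omega> n a) (itc \<omega> n b) \<le> B n"
  obtains N :: nat where "\<And>n. cdiam (itc \<omega> n ` carc x y) \<le> 2 * real N * B n"
proof -
  define L where "L = arclen x y"
  define h where "h = 1 / (2 * (real k + 1))"
  define N where "N = nat \<lceil>L / h\<rceil>"
  have carc: "carc x y = frac ` {x..x + L}" using carc_lift[OF x y xy] by (simp add: L_def)
  have "h > 0" by (simp add: h_def)
  have from_x: "cdist (itc \<omega> n x) (itc \<omega> n (frac s)) \<le> real N * B n" if "s \<in> {x..x + L}" for s n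
  proof -
    have "(\<lambda>s. itc \<omega> n (frac s)) ` {x..x + L} \<subseteq> circle"
      using itc_in_circle[OF \<omega>] by auto
    moreover have "cdist (itc \<omega> n (frac s)) (itc \<omega> n (frac s')) \<le> B n"
      if "s \<in> {x..x + L}" "\<bar>s - s'\<bar> \<le> h" for s s'
    proof -
      have "h < 1 / (real k + 1)" by (simp add: h_def field_simps)
      then have "cdist (frac s) (frac s') < 1 / (real k + 1)"
        using cdist_frac_le[of s s'] that(2) by linarith
      then have "near_pair (carc x y) k (frac s) (frac s')"
        using that(1) carc by (auto simp: near_pair_def intro!: bexI[of _ s])
      then show ?thesis by (rule near)
    qed
    ultimately show ?thesis
      using cdist_chain_bound[of "\<lambda>s. itc \<omega> n (frac s)" x "x + L" h "B n" s] \<open>h > 0\<close> that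
      by (simp add: frac_circle_id[OF x] N_def)
  qed
  have "cdiam (itc \<omega> n ` carc x y) \<le> 2 * real N * B n" for n
  proof (rule cdiam_le)
    fix a b assume "a \<in> itc \<omega> n ` carc x y" "b \<in> itc \<omega> n ` carc x y"
    then obtain s t where st: "s \<in> {x..x + L}" "t \<in> {x..x + L}"
      and ab: "a = itc \<omega> n (frac s)" "b = itc \<omega> n (frac t)" using carc by auto
    moreover have "itc \<omega> n x \<in> circle" using itc_in_circle[OF \<omega> x] .
    ultimately have "cdist a b \<le> cdist (itc \<omega> n x) a + cdist (itc \<omega> n x) b"
      using cdist_triangle[of a "itc \<omega> n x" b] cdist_commute[of a] itc_in_circle[OF \<omega>] by simp
    also have "\<dots> \<le> real N * B n + real N * B n"
      unfolding ab using from_x[OF st(1), of n] from_x[OF st(2), of n] by (rule add_mono)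
    finally show "cdist a b \<le> 2 * real N * B n" by (simp add: algebra_simps)
  qed (use carc_eq_oarc_Un[OF x y xy] in auto)
  then show thesis by (rule that)
qed

lemma contracting_near_carc_limsup:
  assumes \<omega>: "\<omega> \<in> UNIV \<rightarrow> HomS1" and q: "0 < q" and x: "x \<in> circle" and y: "y \<in> circle"
    and xy: "x \<noteq> y" and contr: "contracting_near q \<omega> (carc x y)"
  shows "limsup (\<lambda>n. ereal (ln (cdiam (itc \<omega> n ` carc x y)) / real n)) \<le> ereal (ln q)"
proof -
  obtain C k where "\<forall>a b. near_pair (carc x y) k a b \<longrightarrow>
      (\<forall>n. cdist (itc \<omega> n a) (itc \<omega> n b) \<le> real C * q ^ n)"
    using contr unfolding contracting_near_def by blast
  then obtain N where "\<And>n. cdiam (itc \<omega> n ` carc x y) \<le> 2 * real N * (real C * q ^ n)"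
    using cdiam_itc_carc_le[OF \<omega> x y xy, of k "\<lambda>n. real C * q ^ n"] by blast
  then show ?thesis
    using limsup_ln_le_ln[OF cdiam_itc_carc_pos[OF \<omega> x y xy] q, where K = "2 * real N * real C"]
    by (simp add: mult.assoc)
qed

lemma contracting_near_rat_carc_limsup:
  assumes "\<omega> \<in> UNIV \<rightarrow> HomS1" "0 < q" "x \<in> circle" "y \<in> circle" "x \<noteq> y"
    and "contracting_near_rat q \<omega> (carc x y)"
  shows "limsup (\<lambda>n. ereal (ln (cdiam (itc \<omega> n ` carc x y)) / real n)) \<le> ereal (ln q)"
  using assms
  by (intro contracting_near_carc_limsup contracting_near_rat_imp_contracting_near carc_subset_circle)

lemma diam_le_imp_contracting_near_rat_ccball:
  assumes \<omega>: "\<omega> \<in> UNIV \<rightarrow> HomS1" and c: "c \<in> circle" and a: "a \<in> circle" and b: "b \<in> circle"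
    and ab: "a \<noteq> b" and "c \<in> oarc a b" and diam: "\<forall>n. cdiam (itc \<omega> n ` carc a b) \<le> q ^ n"
  shows "\<exists>k. contracting_near_rat q \<omega> (ccball c (1 / (real k + 1)))"
proof -
  obtain \<rho> where "\<rho> > 0" and \<rho>: "\<forall>t\<in>circle. cdist c t < \<rho> \<longrightarrow> t \<in> oarc a b"
    using copen_oarc[OF a b ab] \<open>c \<in> oarc a b\<close> unfolding copen_def by blast
  obtain k where "inverse (real (Suc k)) < \<rho> / 2" using reals_Archimedean[of "\<rho>/2"] \<open>\<rho> > 0\<close> by auto
  then have k: "1 / (real k + 1) < \<rho> / 2" by (simp add: inverse_eq_divide add.commute)
  have "cdist (itc \<omega> n u) (itc \<omega> n v) \<le> real (1::nat) * q ^ n"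
    if near: "near_pair (ccball c (1 / (real k + 1))) k u v" for u v n
  proof -
    obtain z where z: "z \<in> circle" "cdist c z \<le> 1 / (real k + 1)"
        "cdist z u < 1 / (real k + 1)" "cdist z v < 1 / (real k + 1)"
      and u: "u \<in> circle" and v: "v \<in> circle"
      using near unfolding near_pair_def ccball_def by blast
    have "cdist c u < \<rho>" "cdist c v < \<rho>"
      using k z cdist_triangle[OF c z(1) u] cdist_triangle[OF c z(1) v] by linarith+
    then have "u \<in> carc a b" "v \<in> carc a b"
      using \<rho> u v carc_eq_oarc_Un[OF a b ab] by blast+
    then have "cdist (itc \<omega> n u) (itc \<omega> n v) \<le> cdiam (itc \<omega> n ` carc a b)"
      by (intro cdist_le_cdiam) auto
    also have "\<dots> \<le> q ^ n" using diam by blast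
    finally show ?thesis by simp
  qed
  then show ?thesis unfolding contracting_near_rat_def by blast
qed

section \<open>Measurability\<close>

text \<open>Through this embedding, convergence in \<open>cdist\<close> becomes ordinary convergence in \<open>\<complex>\<close>,
  which is what Borel measurability needs.\<close>

definition circ_exp :: "real \<Rightarrow> complex" where
  "circ_exp t = cis (2 * pi * t)"

definition circ_arg :: "complex \<Rightarrow> real" where
  \<comment> \<open>the argument is clamped to \<open>[-1, 1]\<close> so that \<open>arccos\<close> is continuous, hence Borel\<close>
  "circ_arg z = (let \<theta> = arccos (max (-1) (min 1 (Re z))) in
     (if Im z \<ge> 0 then \<theta> else 2 * pi - \<theta>) / (2 * pi))"

lemma circ_exp_frac: "circ_exp (frac s) = circ_exp s"
proof -
  have "circ_exp s = circ_exp (frac s) * cis (2 * pi * of_int \<lfloor>s\<rfloor>)"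
    by (simp add: circ_exp_def cis_mult frac_def algebra_simps)
  also have "cis (2 * pi * of_int \<lfloor>s\<rfloor>) = 1" by (rule cis_multiple_2pi) simp
  finally show ?thesis by simp
qed

lemma circ_arg_circ_exp:
  assumes "t \<in> circle"
  shows "circ_arg (circ_exp t) = t"
proof -
  have t: "0 \<le> t" "t < 1" using assms by (auto simp: circle_def)
  show ?thesis
  proof (cases "t \<le> 1/2")
    case True
    then have "0 \<le> 2 * pi * t" "2 * pi * t \<le> pi" using t by auto
    then have "sin (2 * pi * t) \<ge> 0" "arccos (cos (2 * pi * t)) = 2 * pi * t"
      by (auto intro: sin_ge_zero arccos_cos)
    then show ?thesis by (simp add: circ_arg_def circ_exp_def)
  next
    case False
    then have "pi < 2 * pi * t" "2 * pi * t < 2 * pi" using t by auto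
    then have "sin (2 * pi * t) < 0" by (rule sin_lt_zero)
    moreover have "arccos (cos (2 * pi * t)) = 2 * pi - 2 * pi * t"
    proof -
      have "cos (2 * pi * t) = cos (2 * pi - 2 * pi * t)" by (simp add: cos_diff)
      moreover have "arccos (cos (2 * pi - 2 * pi * t)) = 2 * pi - 2 * pi * t"
        using \<open>pi < 2 * pi * t\<close> \<open>2 * pi * t < 2 * pi\<close> by (intro arccos_cos) auto
      ultimately show ?thesis by simp
    qed
    ultimately show ?thesis by (simp add: circ_arg_def circ_exp_def)
  qed
qed

lemma circ_exp_uniformly_continuous:
  assumes "e > 0"
  obtains d where "d > 0" "\<And>u v. u \<in> circle \<Longrightarrow> v \<in> circle \<Longrightarrow> cdist u v < d \<Longrightarrow>
    cmod (circ_exp u - circ_exp v) < e"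
proof -
  have "isCont cis 0"
    using continuous_on_cis[of UNIV "\<lambda>x. x"] by (simp add: continuous_on_eq_continuous_at)
  then obtain d0 where "d0 > 0" and d0: "\<forall>x. dist x 0 < d0 \<longrightarrow> dist (cis x) (cis 0) < e"
    using assms unfolding continuous_at_eps_delta by blast
  have "cmod (circ_exp u - circ_exp v) < e"
    if u: "u \<in> circle" and v: "v \<in> circle" and uv: "cdist u v < d0 / (2 * pi)" for u v
  proof -
    obtain \<delta> where \<delta>: "\<bar>\<delta>\<bar> = cdist v u" "u = frac (v + \<delta>)" using cdist_lift[OF v u] .
    have "circ_exp u = circ_exp (v + \<delta>)" using \<delta>(2) circ_exp_frac by simp
    also have "\<dots> = circ_exp v * cis (2 * pi * \<delta>)"
      by (simp add: circ_exp_def cis_mult algebra_simps)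
    finally have "circ_exp u = circ_exp v * cis (2 * pi * \<delta>)" .
    then have "circ_exp u - circ_exp v = circ_exp v * (cis (2 * pi * \<delta>) - 1)"
      by (simp add: algebra_simps)
    then have "cmod (circ_exp u - circ_exp v) = cmod (cis (2 * pi * \<delta>) - 1)"
      by (simp add: norm_mult circ_exp_def)
    moreover have "\<bar>2 * pi * \<delta>\<bar> < d0"
      using \<delta>(1) uv cdist_commute[of u v] by (simp add: abs_mult field_simps)
    ultimately show ?thesis using d0 by (simp add: dist_norm)
  qed
  then show thesis using \<open>d0 > 0\<close> by (intro that[of "d0 / (2 * pi)"]) auto
qed

lemma borel_measurable_circ_exp: "circ_exp \<in> borel_measurable borel"
  unfolding circ_exp_def by (intro borel_measurable_continuous_onI continuous_intros)

lemma borel_measurable_circ_arg: "circ_arg \<in> borel_measurable borel"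
proof -
  have "(\<lambda>x. arccos (max (-1) (min 1 x))) \<in> borel_measurable borel"
    by (intro borel_measurable_continuous_onI continuous_intros) auto
  then show ?thesis unfolding circ_arg_def Let_def by measurable
qed

lemma measurable_of_circ_exp:
  assumes "(\<lambda>x. circ_exp (F x)) \<in> borel_measurable M" "\<And>x. x \<in> space M \<Longrightarrow> F x \<in> circle"
  shows "F \<in> borel_measurable M"
proof -
  have "(\<lambda>x. circ_arg (circ_exp (F x))) \<in> borel_measurable M"
    using assms(1) by (rule measurable_compose[OF _ borel_measurable_circ_arg])
  moreover have "circ_arg (circ_exp (F x)) = F x" if "x \<in> space M" for x
    using assms(2)[OF that] by (rule circ_arg_circ_exp)
  ultimately show ?thesis using measurable_cong[of M "\<lambda>x. circ_arg (circ_exp (F x))" F] by simp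
qed

lemma cdist_le_hdist: "c \<in> circle \<Longrightarrow> cdist (f c) (g c) \<le> hdist f g"
  unfolding hdist_def by (rule cSup_upper) (auto intro: bdd_aboveI[of _ "1/2"] cdist_le_half)

lemma hdist_le: "(\<And>c. c \<in> circle \<Longrightarrow> cdist (f c) (g c) \<le> B) \<Longrightarrow> hdist f g \<le> B"
  unfolding hdist_def by (rule cSup_least) (auto simp: circle_def)

lemma hdist_self [simp]: "hdist f f = 0"
proof -
  have "{cdist (f x) (f x) |x. x \<in> circle} = {0}" by (auto simp: circle_def)
  then show ?thesis by (simp add: hdist_def)
qed

lemma hdist_triangle:
  "f \<in> circle \<rightarrow> circle \<Longrightarrow> g \<in> circle \<rightarrow> circle \<Longrightarrow> h \<in> circle \<rightarrow> circle \<Longrightarrow>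
    hdist f h \<le> hdist f g + hdist g h"
  by (rule hdist_le) (smt (verit) PiE cdist_le_hdist cdist_triangle)

lemma hopen_hball:
  assumes h: "h \<in> HomS1"
  shows "hopen {g \<in> HomS1. hdist h g < e}"
  unfolding hopen_def
proof (intro conjI ballI)
  fix g assume g: "g \<in> {g \<in> HomS1. hdist h g < e}"
  have "g' \<in> {g \<in> HomS1. hdist h g < e}" if g': "g' \<in> HomS1" "hdist g g' < e - hdist h g" for g'
  proof -
    have "hdist h g' \<le> hdist h g + hdist g g'"
      using h g g' by (intro hdist_triangle HomS1_funcset) auto
    then show ?thesis using g' by simp
  qed
  then show "\<exists>e'>0. \<forall>g'\<in>HomS1. hdist g g' < e' \<longrightarrow> g' \<in> {g \<in> HomS1. hdist h g < e}"
    using g by (intro exI[of _ "e - hdist h g"]) auto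
qed blast

lemma hopen_in_borel_HomS1: "hopen U \<Longrightarrow> U \<in> borel_HomS1"
  unfolding borel_HomS1_def by (rule sigma_sets.Basic) simp

lemma hopen_eval_vimage:
  assumes c: "c \<in> circle" and "open U"
  shows "hopen ((\<lambda>f. circ_exp (f c)) -` U \<inter> HomS1)"
  unfolding hopen_def
proof (intro conjI ballI)
  fix f assume f: "f \<in> (\<lambda>f. circ_exp (f c)) -` U \<inter> HomS1"
  obtain e where "e > 0" and e: "\<forall>z. dist z (circ_exp (f c)) < e \<longrightarrow> z \<in> U"
    using \<open>open U\<close> f unfolding open_dist by blast
  obtain d where "d > 0" and d: "\<And>u v. u \<in> circle \<Longrightarrow> v \<in> circle \<Longrightarrow> cdist u v < d \<Longrightarrow>
      cmod (circ_exp u - circ_exp v) < e"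
    using circ_exp_uniformly_continuous[OF \<open>e > 0\<close>] by blast
  have "g \<in> (\<lambda>f. circ_exp (f c)) -` U \<inter> HomS1" if g: "g \<in> HomS1" "hdist f g < d" for g
  proof -
    have "f c \<in> circle" "g c \<in> circle" using f g c HomS1_funcset by auto
    moreover have "cdist (f c) (g c) < d" using cdist_le_hdist[OF c, of f g] g by simp
    ultimately have "dist (circ_exp (g c)) (circ_exp (f c)) < e"
      using d by (simp add: dist_norm norm_minus_commute)
    then show ?thesis using e g by blast
  qed
  then show "\<exists>e>0. \<forall>g\<in>HomS1. hdist f g < e \<longrightarrow> g \<in> (\<lambda>f. circ_exp (f c)) -` U \<inter> HomS1"
    using \<open>d > 0\<close> by blast
qed blast

lemma floor_grid_approx:
  fixes m :: nat
  assumes "t \<in> circle"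
  defines "g \<equiv> real_of_int \<lfloor>real (Suc m) * t\<rfloor> / real (Suc m)"
  shows "g \<in> circle" "cdist t g < 1 / real (Suc m)"
proof -
  have t: "0 \<le> t" "t < 1" using assms(1) by (auto simp: circle_def)
  have fl: "real_of_int \<lfloor>real (Suc m) * t\<rfloor> \<le> real (Suc m) * t"
    "real (Suc m) * t < real_of_int \<lfloor>real (Suc m) * t\<rfloor> + 1"
    by linarith+
  have "t - g = (real (Suc m) * t - real_of_int \<lfloor>real (Suc m) * t\<rfloor>) / real (Suc m)"
    by (simp add: g_def diff_divide_distrib)
  also have "\<dots> < 1 / real (Suc m)"
  proof (rule divide_strict_right_mono)
    show "real (Suc m) * t - real_of_int \<lfloor>real (Suc m) * t\<rfloor> < 1" using fl(2) by linarith
  qed simp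
  finally have "t - g < 1 / real (Suc m)" .
  moreover have "0 \<le> real_of_int \<lfloor>real (Suc m) * t\<rfloor>" using t by simp
  then have "0 \<le> g" by (simp add: g_def)
  moreover have "g \<le> t" using fl(1) by (simp add: g_def divide_le_eq mult.commute)
  ultimately show "g \<in> circle" "cdist t g < 1 / real (Suc m)"
    using t cdist_le_abs[of t g] by (auto simp: circle_def)
qed

lemma circ_exp_grid_tendsto:
  assumes f: "f \<in> HomS1" and t: "t \<in> circle"
  shows "(\<lambda>m. circ_exp (f (real_of_int \<lfloor>real (Suc m) * t\<rfloor> / real (Suc m)))) \<longlonglongrightarrow> circ_exp (f t)"
proof (rule LIMSEQ_I)
  fix r :: real assume "r > 0"
  obtain d1 where "d1 > 0" and d1: "\<And>u v. u \<in> circle \<Longrightarrow> v \<in> circle \<Longrightarrow> cdist u v < d1 \<Longrightarrow>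
      cmod (circ_exp u - circ_exp v) < r"
    using circ_exp_uniformly_continuous[OF \<open>r > 0\<close>] by blast
  obtain d2 where "d2 > 0" and d2: "\<forall>u\<in>circle. \<forall>v\<in>circle. cdist u v < d2 \<longrightarrow> cdist (f u) (f v) < d1"
    using HomS1_uccont[OF f] \<open>d1 > 0\<close> unfolding uccont_def by blast
  obtain N where N: "inverse (real (Suc N)) < d2" using reals_Archimedean[OF \<open>d2 > 0\<close>] by blast
  have "cmod (circ_exp (f (real_of_int \<lfloor>real (Suc m) * t\<rfloor> / real (Suc m))) - circ_exp (f t)) < r"
    if "m \<ge> N" for m
  proof -
    define g where "g = real_of_int \<lfloor>real (Suc m) * t\<rfloor> / real (Suc m)"
    have "1 / real (Suc m) \<le> inverse (real (Suc N))"
      using that by (simp add: inverse_eq_divide frac_le)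
    then have "cdist t g < d2" using floor_grid_approx(2)[OF t, of m] N by (simp add: g_def)
    moreover have g: "g \<in> circle" using floor_grid_approx(1)[OF t] by (simp add: g_def)
    ultimately have "cdist (f t) (f g) < d1" using d2 t by blast
    then show ?thesis
      using d1 HomS1_funcset[OF f] t g by (simp add: norm_minus_commute Pi_iff g_def)
  qed
  then show "\<exists>N. \<forall>m\<ge>N. norm (circ_exp (f (real_of_int \<lfloor>real (Suc m) * t\<rfloor> / real (Suc m))) - circ_exp (f t)) < r"
    by blast
qed

locale hom_random_walk =
  fixes \<nu> :: "(real \<Rightarrow> real) measure"
  assumes prob: "prob_space \<nu>" and space_nu: "space \<nu> = HomS1" and sets_nu: "sets \<nu> = borel_HomS1"
begin

sublocale seq: sequence_space \<nu>
  by (simp add: sequence_space_def product_prob_space_def product_sigma_finite_def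
      product_prob_space_axioms_def prob prob_space_imp_sigma_finite)

lemma prod_measure_eq: "prod_measure \<nu> = seq.S"
  by (simp add: prod_measure_def)

lemma space_seq: "space seq.S = UNIV \<rightarrow> HomS1"
  by (simp add: space_PiM space_nu PiE_def)

lemma measurable_eval: "(\<lambda>f. f c) \<in> borel_measurable \<nu>"
proof (cases "c \<in> circle")
  case True
  have "(\<lambda>f. circ_exp (f c)) \<in> borel_measurable \<nu>"
  proof (rule borel_measurableI)
    fix U :: "complex set" assume "open U"
    then show "(\<lambda>f. circ_exp (f c)) -` U \<inter> space \<nu> \<in> sets \<nu>"
      using hopen_eval_vimage[OF True] hopen_in_borel_HomS1 space_nu sets_nu by simp
  qed
  then show ?thesis
    using True space_nu HomS1_funcset by (intro measurable_of_circ_exp) auto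
next
  case False
  have "f c = undefined" if "f \<in> space \<nu>" for f
    using that False space_nu unfolding HomS1_def extensional_def by auto
  then show ?thesis using measurable_cong[of \<nu> "\<lambda>f. f c" "\<lambda>f. undefined"] by simp
qed

text \<open>Approximate the point from below on the grid \<open>\<int> / (m + 1)\<close>, where only countably many
  evaluations occur, and pass to the limit through the embedding into \<open>\<complex>\<close>.\<close>

lemma measurable_apply_coordinate:
  assumes X: "X \<in> borel_measurable seq.S" and X_circle: "\<And>\<omega>. \<omega> \<in> space seq.S \<Longrightarrow> X \<omega> \<in> circle"
  shows "(\<lambda>\<omega>. \<omega> n (X \<omega>)) \<in> borel_measurable seq.S"
proof -
  define grid where "grid m \<omega> = real_of_int \<lfloor>real (Suc m) * X \<omega>\<rfloor> / real (Suc m)" for m \<omega>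
  have Y: "(\<lambda>\<omega>. circ_exp (\<omega> n (grid m \<omega>))) \<in> borel_measurable seq.S" for m
  proof -
    have f: "(\<lambda>\<omega>. circ_exp (\<omega> n (real_of_int i / real (Suc m)))) \<in> borel_measurable seq.S" for i :: int
    proof -
      have "(\<lambda>\<omega>. \<omega> n) \<in> measurable seq.S \<nu>" by (rule measurable_component_singleton) simp
      then have "(\<lambda>\<omega>. \<omega> n (real_of_int i / real (Suc m))) \<in> borel_measurable seq.S"
        using measurable_compose[OF _ measurable_eval] by blast
      then show ?thesis using measurable_compose[OF _ borel_measurable_circ_exp] by blast
    qed
    have g: "(\<lambda>\<omega>. \<lfloor>real (Suc m) * X \<omega>\<rfloor>) \<in> measurable seq.S (count_space UNIV)"
    proof -
      have "(\<lambda>\<omega>. real (Suc m) * X \<omega>) \<in> borel_measurable seq.S" using X by measurable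
      moreover have "(floor :: real \<Rightarrow> int) \<in> measurable borel (count_space UNIV)" by measurable
      ultimately show ?thesis using measurable_compose by blast
    qed
    show ?thesis unfolding grid_def by (rule measurable_compose_countable[OF f g])
  qed
  have "(\<lambda>\<omega>. circ_exp (\<omega> n (X \<omega>))) \<in> borel_measurable seq.S"
  proof (rule borel_measurable_LIMSEQ_metric[where f = "\<lambda>m \<omega>. circ_exp (\<omega> n (grid m \<omega>))", OF Y])
    fix \<omega> assume "\<omega> \<in> space seq.S"
    then show "(\<lambda>m. circ_exp (\<omega> n (grid m \<omega>))) \<longlonglongrightarrow> circ_exp (\<omega> n (X \<omega>))"
      unfolding grid_def using space_seq X_circle by (intro circ_exp_grid_tendsto) auto
  qed
  then show ?thesis
    using X_circle space_seq HomS1_funcset by (intro measurable_of_circ_exp) (auto simp: Pi_iff)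
qed

lemma measurable_itc:
  assumes "a \<in> circle"
  shows "(\<lambda>\<omega>. itc \<omega> n a) \<in> borel_measurable seq.S"
proof (induction n)
  case (Suc n)
  have "itc \<omega> n a \<in> circle" if "\<omega> \<in> space seq.S" for \<omega>
    using that assms itc_in_circle space_seq by simp
  then show ?case using measurable_apply_coordinate[OF Suc] by simp
qed simp

lemma pred_itc_cdist_le:
  assumes "a \<in> circle" "b \<in> circle"
  shows "Measurable.pred seq.S (\<lambda>\<omega>. \<forall>n. cdist (itc \<omega> n a) (itc \<omega> n b) \<le> c n)"
proof -
  have [measurable]: "(\<lambda>\<omega>. itc \<omega> n a) \<in> borel_measurable seq.S" "(\<lambda>\<omega>. itc \<omega> n b) \<in> borel_measurable seq.S"
    for n using measurable_itc assms by auto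
  have "(\<lambda>\<omega>. cdist (itc \<omega> n a) (itc \<omega> n b)) \<in> borel_measurable seq.S" for n
    unfolding cdist_def by measurable
  then have "Measurable.pred seq.S (\<lambda>\<omega>. cdist (itc \<omega> n a) (itc \<omega> n b) \<le> c n)" for n
    unfolding pred_def by (intro borel_measurable_le borel_measurable_const)
  then show ?thesis by (intro pred_intros_countable)
qed

lemma pred_contracting_near_rat: "Measurable.pred seq.S (\<lambda>\<omega>. contracting_near_rat q \<omega> A)"
proof -
  have "Measurable.pred seq.S (\<lambda>\<omega>. near_pair A k (of_rat a) (of_rat b) \<longrightarrow>
      (\<forall>n. cdist (itc \<omega> n (of_rat a)) (itc \<omega> n (of_rat b)) \<le> real C * q ^ n))" for C k a b
  proof (cases "near_pair A k (of_rat a) (of_rat b)")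
    case True
    then have "of_rat a \<in> circle" "of_rat b \<in> circle" by (auto simp: near_pair_def)
    then show ?thesis using True pred_itc_cdist_le by simp
  qed simp
  then show ?thesis unfolding contracting_near_rat_def by (intro pred_intros_countable)
qed

definition not_contracting :: "real \<Rightarrow> real set \<Rightarrow> (nat \<Rightarrow> real \<Rightarrow> real) set" where
  "not_contracting q A = {\<omega> \<in> space seq.S. \<not> contracting_near_rat q \<omega> A}"

lemma sets_not_contracting: "not_contracting q A \<in> sets seq.S"
proof -
  have "not_contracting q A = space seq.S - {\<omega> \<in> space seq.S. contracting_near_rat q \<omega> A}"
    unfolding not_contracting_def by blast
  then show ?thesis using pred_contracting_near_rat[THEN predE] by simp
qed

lemma not_contracting_mono: "A \<subseteq> A' \<Longrightarrow> not_contracting q A \<subseteq> not_contracting q A'"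
  unfolding not_contracting_def using contracting_near_rat_mono by blast

lemma measure_not_contracting_mono:
  "A \<subseteq> A' \<Longrightarrow> measure seq.S (not_contracting q A) \<le> measure seq.S (not_contracting q A')"
  by (intro seq.P.finite_measure_mono not_contracting_mono sets_not_contracting)

lemma measurable_shift_seq: "shift_seq T \<in> measurable seq.S seq.S"
proof -
  have "(\<lambda>\<omega> i. \<omega> (i + T)) \<in> measurable seq.S seq.S"
  proof (rule measurable_PiM_single')
    show "\<And>i. i \<in> UNIV \<Longrightarrow> (\<lambda>\<omega>. \<omega> (i + T)) \<in> measurable seq.S \<nu>"
      by (rule measurable_component_singleton) simp
    show "(\<lambda>\<omega> i. \<omega> (i + T)) \<in> space seq.S \<rightarrow> (\<Pi>\<^sub>E i\<in>UNIV. space \<nu>)"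
      by (auto simp: space_PiM)
  qed
  then show ?thesis by (simp add: shift_seq_def[abs_def])
qed

lemma sets_shift_seq_vimage:
  assumes "A \<in> sets seq.S" "E \<in> sets seq.S"
  shows "{\<omega> \<in> A. shift_seq T \<omega> \<in> E} \<in> sets seq.S"
proof -
  have "{\<omega> \<in> A. shift_seq T \<omega> \<in> E} = A \<inter> (shift_seq T -` E \<inter> space seq.S)"
    using sets.sets_into_space[OF assms(1)] by auto
  then show ?thesis using assms measurable_sets[OF measurable_shift_seq] by simp
qed

definition depends_on_prefix :: "(nat \<Rightarrow> real \<Rightarrow> real) set \<Rightarrow> nat \<Rightarrow> bool" where
  "depends_on_prefix E T \<longleftrightarrow> (\<forall>\<omega>\<in>space seq.S. \<forall>\<omega>'\<in>space seq.S.
     (\<forall>i<T. \<omega> i = \<omega>' i) \<longrightarrow> (\<omega> \<in> E \<longleftrightarrow> \<omega>' \<in> E))"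

lemma depends_on_prefix_mono:
  assumes "depends_on_prefix E m" "m \<le> m'"
  shows "depends_on_prefix E m'"
  unfolding depends_on_prefix_def
proof (intro ballI impI)
  fix \<omega> \<omega>' assume "\<omega> \<in> space seq.S" "\<omega>' \<in> space seq.S" "\<forall>i<m'. \<omega> i = \<omega>' i"
  then show "\<omega> \<in> E \<longleftrightarrow> \<omega>' \<in> E"
    using assms unfolding depends_on_prefix_def by (meson less_le_trans)
qed

lemma shift_seq_in_space: "\<omega> \<in> space seq.S \<Longrightarrow> shift_seq T \<omega> \<in> space seq.S"
  using space_seq shift_seq_funcset by auto

lemma depends_on_prefix_shift_seq:
  assumes A: "depends_on_prefix A T" and E: "depends_on_prefix E m"
  shows "depends_on_prefix {\<omega> \<in> A. shift_seq T \<omega> \<in> E} (T + m)"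
  unfolding depends_on_prefix_def
proof (intro ballI impI)
  fix \<omega> \<omega>' assume \<omega>: "\<omega> \<in> space seq.S" "\<omega>' \<in> space seq.S" and agree: "\<forall>i<T + m. \<omega> i = \<omega>' i"
  have "\<forall>i<T. \<omega> i = \<omega>' i" using agree by simp
  then have "\<omega> \<in> A \<longleftrightarrow> \<omega>' \<in> A"
    using A[unfolded depends_on_prefix_def, rule_format, OF \<omega>] by blast
  moreover have "\<forall>i<m. shift_seq T \<omega> i = shift_seq T \<omega>' i" using agree by (simp add: shift_seq_def)
  then have "shift_seq T \<omega> \<in> E \<longleftrightarrow> shift_seq T \<omega>' \<in> E"
    using E[unfolded depends_on_prefix_def, rule_format, OF shift_seq_in_space[OF \<omega>(1)] shift_seq_in_space[OF \<omega>(2)]]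
    by blast
  ultimately show "\<omega> \<in> {\<omega> \<in> A. shift_seq T \<omega> \<in> E} \<longleftrightarrow> \<omega>' \<in> {\<omega> \<in> A. shift_seq T \<omega> \<in> E}" by simp
qed

lemma comb_seq_vimage:
  assumes A: "A \<in> sets seq.S" and dep: "depends_on_prefix A T" and N: "N \<in> sets seq.S"
  shows "(\<lambda>(\<omega>, \<omega>'). comb_seq T \<omega> \<omega>') -` {\<omega> \<in> A. shift_seq T \<omega> \<in> N} \<inter> space (seq.S \<Otimes>\<^sub>M seq.S)
    = A \<times> N"
proof -
  have comb: "comb_seq T \<omega> \<omega>' \<in> space seq.S" "shift_seq T (comb_seq T \<omega> \<omega>') = \<omega>'"
    "comb_seq T \<omega> \<omega>' \<in> A \<longleftrightarrow> \<omega> \<in> A"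
    if "\<omega> \<in> space seq.S" "\<omega>' \<in> space seq.S" for \<omega> \<omega>'
  proof -
    show cs: "comb_seq T \<omega> \<omega>' \<in> space seq.S"
      using measurable_space[OF measurable_comb_seq[where i = T], of "(\<omega>, \<omega>')"] that
      by (simp add: space_pair_measure)
    show "shift_seq T (comb_seq T \<omega> \<omega>') = \<omega>'" by (simp add: shift_seq_def comb_seq_add)
    have "\<forall>i<T. comb_seq T \<omega> \<omega>' i = \<omega> i" by (simp add: comb_seq_less)
    then show "comb_seq T \<omega> \<omega>' \<in> A \<longleftrightarrow> \<omega> \<in> A"
      using dep[unfolded depends_on_prefix_def, rule_format, OF cs that(1)] by blast
  qed
  show ?thesis
  proof (intro set_eqI iffI)
    fix p assume p: "p \<in> (\<lambda>(\<omega>, \<omega>'). comb_seq T \<omega> \<omega>') -` {\<omega> \<in> A. shift_seq T \<omega> \<in> N} \<inter>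
      space (seq.S \<Otimes>\<^sub>M seq.S)"
    obtain \<omega> \<omega>' where p_eq: "p = (\<omega>, \<omega>')" by fastforce
    have "\<omega> \<in> space seq.S" "\<omega>' \<in> space seq.S" using p p_eq by (auto simp: space_pair_measure)
    then show "p \<in> A \<times> N" using p p_eq comb[of \<omega> \<omega>'] by simp
  next
    fix p assume p: "p \<in> A \<times> N"
    obtain \<omega> \<omega>' where p_eq: "p = (\<omega>, \<omega>')" by fastforce
    have "\<omega> \<in> space seq.S" "\<omega>' \<in> space seq.S"
      using p p_eq sets.sets_into_space[OF A] sets.sets_into_space[OF N] by auto
    then show "p \<in> (\<lambda>(\<omega>, \<omega>'). comb_seq T \<omega> \<omega>') -` {\<omega> \<in> A. shift_seq T \<omega> \<in> N} \<inter>
      space (seq.S \<Otimes>\<^sub>M seq.S)"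
      using p p_eq comb[of \<omega> \<omega>'] by (simp add: space_pair_measure)
  qed
qed

text \<open>Split the sequence space as a product at time \<open>T\<close>.\<close>

lemma emeasure_shift_seq_indep:
  assumes A: "A \<in> sets seq.S" and dep: "depends_on_prefix A T" and N: "N \<in> sets seq.S"
  shows "emeasure seq.S {\<omega> \<in> A. shift_seq T \<omega> \<in> N} = emeasure seq.S A * emeasure seq.S N"
proof -
  let ?\<Phi> = "\<lambda>(\<omega>, \<omega>'). comb_seq T \<omega> \<omega>'"
  let ?X = "{\<omega> \<in> A. shift_seq T \<omega> \<in> N}"
  have "emeasure seq.S ?X = emeasure (distr (seq.S \<Otimes>\<^sub>M seq.S) seq.S ?\<Phi>) ?X"
    using seq.PiM_comb_seq[of T] by simp
  also have "\<dots> = emeasure (seq.S \<Otimes>\<^sub>M seq.S) (?\<Phi> -` ?X \<inter> space (seq.S \<Otimes>\<^sub>M seq.S))"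
    by (rule emeasure_distr[OF measurable_comb_seq sets_shift_seq_vimage[OF A N]])
  also have "\<dots> = emeasure (seq.S \<Otimes>\<^sub>M seq.S) (A \<times> N)"
    by (simp only: comb_seq_vimage[OF A dep N])
  also have "\<dots> = emeasure seq.S A * emeasure seq.S N"
    by (rule seq.P.emeasure_pair_measure_Times[OF A N])
  finally show ?thesis .
qed

lemma measure_shift_seq_indep:
  assumes "A \<in> sets seq.S" "depends_on_prefix A T" "N \<in> sets seq.S"
  shows "measure seq.S {\<omega> \<in> A. shift_seq T \<omega> \<in> N} = measure seq.S A * measure seq.S N"
  using emeasure_shift_seq_indep[OF assms]
  by (simp add: seq.P.emeasure_eq_measure ennreal_mult''[symmetric] measure_nonneg)

section \<open>Uniform estimates from local contraction and proximality\<close>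

definition walk_approximates :: "(real \<Rightarrow> real) \<Rightarrow> bool" where
  "walk_approximates h \<longleftrightarrow> (\<forall>e>0. \<exists>m E. E \<in> sets seq.S \<and> depends_on_prefix E m \<and> emeasure seq.S E > 0 \<and>
      (\<forall>\<omega>\<in>E. \<forall>t\<in>circle. cdist (itc \<omega> m t) (h t) < e))"

lemma walk_approximates_support:
  assumes "h \<in> support \<nu>"
  shows "walk_approximates h"
  unfolding walk_approximates_def
proof (intro allI impI)
  fix e :: real assume "e > 0"
  have h: "h \<in> HomS1" and pos: "\<And>U. hopen U \<Longrightarrow> h \<in> U \<Longrightarrow> emeasure \<nu> U > 0"
    using assms unfolding support_def by auto
  define B where "B = {g \<in> HomS1. hdist h g < e}"
  have B: "B \<in> sets \<nu>" using hopen_hball[OF h] hopen_in_borel_HomS1 sets_nu by (simp add: B_def)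
  have "emeasure \<nu> B > 0" using pos[OF hopen_hball[OF h]] h \<open>e > 0\<close> by (simp add: B_def)
  define E where "E = {\<omega> \<in> space seq.S. \<omega> 0 \<in> B}"
  have "E \<in> sets seq.S"
  proof -
    have "(\<lambda>\<omega>. \<omega> 0) \<in> measurable seq.S \<nu>" by (rule measurable_component_singleton) simp
    moreover have "E = (\<lambda>\<omega>. \<omega> 0) -` B \<inter> space seq.S" by (auto simp: E_def)
    ultimately show ?thesis using measurable_sets B by simp
  qed
  moreover have "depends_on_prefix E 1" unfolding depends_on_prefix_def E_def by auto
  moreover have "emeasure seq.S E = emeasure \<nu> B"
    unfolding E_def by (rule seq.emeasure_PiM_Collect_single) (simp_all add: B)
  moreover have "cdist (itc \<omega> 1 t) (h t) < e" if "\<omega> \<in> E" "t \<in> circle" for \<omega> t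
  proof -
    have "cdist (itc \<omega> 1 t) (h t) = cdist (h t) (\<omega> 0 t)" by (simp add: cdist_commute)
    also have "\<dots> \<le> hdist h (\<omega> 0)" using \<open>t \<in> circle\<close> by (rule cdist_le_hdist)
    also have "\<dots> < e" using \<open>\<omega> \<in> E\<close> by (simp add: E_def B_def)
    finally show ?thesis .
  qed
  ultimately show "\<exists>m E. E \<in> sets seq.S \<and> depends_on_prefix E m \<and> emeasure seq.S E > 0 \<and>
      (\<forall>\<omega>\<in>E. \<forall>t\<in>circle. cdist (itc \<omega> m t) (h t) < e)"
    using \<open>emeasure \<nu> B > 0\<close> by (intro exI[of _ 1] exI[of _ E]) simp
qed

lemma walk_approximates_cong:
  "walk_approximates h \<Longrightarrow> (\<And>t. t \<in> circle \<Longrightarrow> h' t = h t) \<Longrightarrow> walk_approximates h'"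
  unfolding walk_approximates_def by simp

text \<open>Approximate \<open>g\<close> first, then \<open>f\<close> on the independent shifted walk.\<close>

lemma walk_approximates_comp:
  assumes f: "walk_approximates f" "uccont f" "f \<in> circle \<rightarrow> circle"
    and g: "walk_approximates g" "g \<in> circle \<rightarrow> circle"
  shows "walk_approximates (\<lambda>t. f (g t))"
  unfolding walk_approximates_def
proof (intro allI impI)
  fix e :: real assume "e > 0"
  obtain d where "d > 0" and d: "\<forall>a\<in>circle. \<forall>b\<in>circle. cdist a b < d \<longrightarrow> cdist (f a) (f b) < e/2"
    using f(2) \<open>e > 0\<close> unfolding uccont_def by (meson half_gt_zero)
  obtain mg Eg where Eg: "Eg \<in> sets seq.S" "depends_on_prefix Eg mg" "emeasure seq.S Eg > 0"
      "\<forall>\<omega>\<in>Eg. \<forall>t\<in>circle. cdist (itc \<omega> mg t) (g t) < d"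
    using g(1) \<open>d > 0\<close> unfolding walk_approximates_def by blast
  have "e/2 > 0" using \<open>e > 0\<close> by simp
  then obtain mf Ef where Ef: "Ef \<in> sets seq.S" "depends_on_prefix Ef mf" "emeasure seq.S Ef > 0"
      "\<forall>\<omega>\<in>Ef. \<forall>t\<in>circle. cdist (itc \<omega> mf t) (f t) < e/2"
    using f(1) unfolding walk_approximates_def by blast
  define E where "E = {\<omega> \<in> Eg. shift_seq mg \<omega> \<in> Ef}"
  have "E \<in> sets seq.S" unfolding E_def using Eg(1) Ef(1) by (rule sets_shift_seq_vimage)
  moreover have "emeasure seq.S E > 0"
    using emeasure_shift_seq_indep[OF Eg(1,2) Ef(1)] Eg(3) Ef(3)
    by (simp add: E_def ennreal_zero_less_mult_iff)
  moreover have "depends_on_prefix E (mg + mf)"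
    unfolding E_def using Eg(2) Ef(2) by (rule depends_on_prefix_shift_seq)
  moreover have "cdist (itc \<omega> (mg + mf) t) (f (g t)) < e" if \<omega>: "\<omega> \<in> E" and t: "t \<in> circle" for \<omega> t
  proof -
    have hom: "\<omega> \<in> UNIV \<rightarrow> HomS1" using \<omega> sets.sets_into_space[OF Eg(1)] space_seq by (auto simp: E_def)
    define s where "s = itc \<omega> mg t"
    have s: "s \<in> circle" using itc_in_circle[OF hom t] by (simp add: s_def)
    have gt: "g t \<in> circle" using g(2) t by auto
    have "cdist (itc (shift_seq mg \<omega>) mf s) (f s) < e/2" using Ef(4) \<omega> s by (simp add: E_def)
    moreover have "cdist s (g t) < d" using Eg(4) \<omega> t by (simp add: E_def s_def)
    then have "cdist (f s) (f (g t)) < e/2" using d s gt by blast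
    moreover have "cdist (itc (shift_seq mg \<omega>) mf s) (f (g t)) \<le>
        cdist (itc (shift_seq mg \<omega>) mf s) (f s) + cdist (f s) (f (g t))"
      using itc_in_circle[OF shift_seq_funcset[OF hom] s] f(3) s gt by (intro cdist_triangle) auto
    ultimately have "cdist (itc (shift_seq mg \<omega>) mf s) (f (g t)) < e" by linarith
    then show ?thesis by (simp add: itc_add s_def)
  qed
  ultimately show "\<exists>m E. E \<in> sets seq.S \<and> depends_on_prefix E m \<and> emeasure seq.S E > 0 \<and>
      (\<forall>\<omega>\<in>E. \<forall>t\<in>circle. cdist (itc \<omega> m t) (f (g t)) < e)"
    by (intro exI[of _ "mg + mf"] exI[of _ E]) blast
qed

lemma walk_approximates_gen_semigroup:
  assumes "h \<in> gen_semigroup (support \<nu>)"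
  shows "walk_approximates h \<and> uccont h \<and> h \<in> circle \<rightarrow> circle"
  using assms
proof (induction rule: gen_semigroup.induct)
  case (base h)
  then have "h \<in> HomS1" by (simp add: support_def)
  then show ?case using walk_approximates_support[OF base] HomS1_uccont HomS1_funcset by blast
next
  case (comp f g)
  have eq: "restrict (f \<circ> g) circle t = f (g t)" if "t \<in> circle" for t using that by simp
  have "walk_approximates (\<lambda>t. f (g t))" "uccont (\<lambda>t. f (g t))"
    using comp.IH walk_approximates_comp uccont_comp by blast+
  then have "walk_approximates (restrict (f \<circ> g) circle)" "uccont (restrict (f \<circ> g) circle)"
    using eq walk_approximates_cong by (auto simp: uccont_def)
  moreover have "restrict (f \<circ> g) circle \<in> circle \<rightarrow> circle" using comp.IH by auto
  ultimately show ?case by blast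
qed

lemma AE_contracting_near_rat_ccball:
  assumes "local_contraction_rate \<nu> q" and c: "c \<in> circle"
  shows "AE \<omega> in seq.S. \<exists>k. contracting_near_rat q \<omega> (ccball c (1 / (real k + 1)))"
proof -
  have "AE \<omega> in seq.S. \<exists>a\<in>circle. \<exists>b\<in>circle. a \<noteq> b \<and> c \<in> oarc a b \<and>
      (\<forall>n. cdiam (itc \<omega> n ` carc a b) \<le> q ^ n)"
    using assms unfolding local_contraction_rate_def prod_measure_eq by blast
  then show ?thesis
  proof (rule AE_mp[OF _ AE_I2], intro impI)
    fix \<omega> assume "\<omega> \<in> space seq.S"
      and "\<exists>a\<in>circle. \<exists>b\<in>circle. a \<noteq> b \<and> c \<in> oarc a b \<and> (\<forall>n. cdiam (itc \<omega> n ` carc a b) \<le> q ^ n)"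
    then show "\<exists>k. contracting_near_rat q \<omega> (ccball c (1 / (real k + 1)))"
      using diam_le_imp_contracting_near_rat_ccball[OF _ c] space_seq by blast
  qed
qed

lemma measure_not_contracting_small_ccball:
  assumes "local_contraction_rate \<nu> q" and c: "c \<in> circle" and "e > 0"
  obtains \<rho> where "\<rho> > 0" "measure seq.S (not_contracting q (ccball c \<rho>)) < e"
proof -
  define E where "E k = not_contracting q (ccball c (1 / (real k + 1)))" for k
  have E: "range E \<subseteq> sets seq.S" by (auto simp: E_def sets_not_contracting)
  have "decseq E"
    unfolding decseq_def
  proof (intro allI impI)
    fix k k' :: nat assume "k \<le> k'"
    then have "1 / (real k' + 1) \<le> 1 / (real k + 1)" by (simp add: frac_le)
    then show "E k' \<subseteq> E k" unfolding E_def by (intro not_contracting_mono ccball_mono)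
  qed
  then have lim: "(\<lambda>k. measure seq.S (E k)) \<longlonglongrightarrow> measure seq.S (\<Inter>k. E k)"
    by (rule seq.P.finite_Lim_measure_decseq[OF E])
  have "(\<Inter>k. E k) \<in> sets seq.S" using E by (intro sets.countable_INT) auto
  moreover have "{\<omega> \<in> space seq.S. \<not> (\<exists>k. contracting_near_rat q \<omega> (ccball c (1 / (real k + 1))))}
      = (\<Inter>k. E k)"
    by (auto simp: E_def not_contracting_def)
  ultimately have "(AE \<omega> in seq.S. \<exists>k. contracting_near_rat q \<omega> (ccball c (1 / (real k + 1))))
      \<longleftrightarrow> emeasure seq.S (\<Inter>k. E k) = 0"
    by (rule AE_iff_measurable)
  then have "measure seq.S (\<Inter>k. E k) = 0"
    using AE_contracting_near_rat_ccball[OF assms(1,2)] by (simp add: measure_def)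
  then have "\<forall>\<^sub>F k in sequentially. measure seq.S (E k) < e"
    using order_tendstoD(2)[OF lim] \<open>e > 0\<close> by simp
  then obtain k where "measure seq.S (E k) < e" using eventually_happens'[OF sequentially_bot] by blast
  then show thesis by (intro that[of "1 / (real k + 1)"]) (simp_all add: E_def)
qed

lemma uniform_ccball_radius:
  assumes "local_contraction_rate \<nu> q" and "e > 0"
  obtains r where "0 < r" "r < 1/2" "\<And>c. c \<in> circle \<Longrightarrow> measure seq.S (not_contracting q (ccball c r)) < e"
proof -
  let ?P = "\<lambda>c r. measure seq.S (not_contracting q (ccball c r)) < e"
  have "\<exists>\<delta>>0. \<forall>c\<in>circle. ?P c \<delta>"
  proof (rule circle_uniform)
    show "?P c \<delta>'" if "?P c \<delta>" "0 < \<delta>'" "\<delta>' \<le> \<delta>" for c \<delta> \<delta>'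
      using that measure_not_contracting_mono[OF ccball_mono[of \<delta>' \<delta> c], of q] by linarith
    fix c assume c: "c \<in> circle"
    obtain \<rho> where "\<rho> > 0" and \<rho>: "?P c \<rho>"
      using measure_not_contracting_small_ccball[OF assms(1) c assms(2)] by blast
    have "?P c' (\<rho> / 2)" if "c' \<in> circle" "cdist c c' < \<rho> / 2" for c'
    proof -
      have "ccball c' (\<rho> / 2) \<subseteq> ccball c \<rho>"
      proof
        fix t assume "t \<in> ccball c' (\<rho> / 2)"
        then have "t \<in> circle" "cdist c' t \<le> \<rho> / 2" by (auto simp: ccball_def)
        then show "t \<in> ccball c \<rho>"
          using that cdist_triangle[OF c that(1), of t] by (auto simp: ccball_def)
      qed
      from measure_not_contracting_mono[OF this, of q] show ?thesis using \<rho> by linarith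
    qed
    then show "\<exists>\<delta>>0. \<forall>c'\<in>circle. cdist c c' < \<delta> \<longrightarrow> ?P c' \<delta>"
      using \<open>\<rho> > 0\<close> by (intro exI[of _ "\<rho> / 2"]) auto
  qed
  then obtain \<delta> where \<delta>: "\<delta> > 0" "\<And>c. c \<in> circle \<Longrightarrow> ?P c \<delta>" by blast
  show thesis
  proof (rule that[of "min \<delta> (1/4)"])
    fix c assume "c \<in> circle"
    have "min \<delta> (1/4) \<le> \<delta>" by simp
    from measure_not_contracting_mono[OF ccball_mono[OF this, of c], of q]
    show "?P c (min \<delta> (1/4))" using \<delta>(2)[OF \<open>c \<in> circle\<close>] by linarith
  qed (use \<delta> in auto)
qed

definition trap :: "real \<Rightarrow> real \<Rightarrow> real \<Rightarrow> real \<Rightarrow> nat \<Rightarrow> (nat \<Rightarrow> real \<Rightarrow> real) set \<Rightarrow> real \<Rightarrow> bool"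
  where "trap r \<eta> u v m E w \<longleftrightarrow> E \<in> sets seq.S \<and> depends_on_prefix E m \<and> w \<in> circle \<and>
    (\<forall>u'\<in>circle. \<forall>v'\<in>circle. cdist u u' < \<eta> \<longrightarrow> cdist v v' < \<eta> \<longrightarrow>
       (\<forall>\<omega>\<in>E. cdist w (itc \<omega> m u') \<le> r \<and> cdist w (itc \<omega> m v') \<le> r))"

lemma trap_nearby:
  assumes "trap r \<eta> u v m E w" "u \<in> circle" "v \<in> circle" "u2 \<in> circle" "v2 \<in> circle"
    "cdist u u2 + \<eta>' \<le> \<eta>" "cdist v v2 + \<eta>' \<le> \<eta>"
  shows "trap r \<eta>' u2 v2 m E w"
proof -
  have "cdist w (itc \<omega> m u') \<le> r \<and> cdist w (itc \<omega> m v') \<le> r"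
    if "u' \<in> circle" "v' \<in> circle" "cdist u2 u' < \<eta>'" "cdist v2 v' < \<eta>'" "\<omega> \<in> E" for u' v' \<omega>
  proof -
    have "cdist u u' \<le> cdist u u2 + cdist u2 u'" "cdist v v' \<le> cdist v v2 + cdist v2 v'"
      using assms(2-5) that(1,2) by (auto intro: cdist_triangle)
    then have "cdist u u' < \<eta>" "cdist v v' < \<eta>" using assms(6,7) that(3,4) by linarith+
    then show ?thesis using assms(1) that(1,2,5) unfolding trap_def by blast
  qed
  then show ?thesis using assms(1) unfolding trap_def by blast
qed

lemma trap_of_approximation:
  assumes g: "g \<in> circle \<rightarrow> circle" and u: "u \<in> circle" and v: "v \<in> circle" and "r > 0"
    and E: "E \<in> sets seq.S" "depends_on_prefix E m"
    and guv: "cdist (g u) (g v) < r/4"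
    and \<eta>: "\<forall>a\<in>circle. \<forall>b\<in>circle. cdist a b < \<eta> \<longrightarrow> cdist (g a) (g b) < r/4"
    and approx: "\<forall>\<omega>\<in>E. \<forall>t\<in>circle. cdist (itc \<omega> m t) (g t) < r/4"
  shows "trap r \<eta> u v m E (g u)"
proof -
  have gu: "g u \<in> circle" and gv: "g v \<in> circle" using g u v by auto
  have "cdist (g u) (itc \<omega> m u') \<le> r \<and> cdist (g u) (itc \<omega> m v') \<le> r"
    if u': "u' \<in> circle" "cdist u u' < \<eta>" and v': "v' \<in> circle" "cdist v v' < \<eta>" and "\<omega> \<in> E" for u' v' \<omega>
  proof -
    have "\<omega> \<in> UNIV \<rightarrow> HomS1" using \<open>\<omega> \<in> E\<close> sets.sets_into_space[OF E(1)] space_seq by auto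
    then have Fu: "itc \<omega> m u' \<in> circle" and Fv: "itc \<omega> m v' \<in> circle" using itc_in_circle u' v' by auto
    have gu': "g u' \<in> circle" and gv': "g v' \<in> circle" using g u' v' by auto
    have "cdist (g u) (g u') < r/4" "cdist (g v) (g v') < r/4" using \<eta> u u' v v' by blast+
    moreover have "cdist (g u') (itc \<omega> m u') < r/4" "cdist (g v') (itc \<omega> m v') < r/4"
      using approx \<open>\<omega> \<in> E\<close> u' v' cdist_commute by metis+
    moreover have "cdist (g u) (itc \<omega> m u') \<le> cdist (g u) (g u') + cdist (g u') (itc \<omega> m u')"
      by (rule cdist_triangle[OF gu gu' Fu])
    moreover have "cdist (g u) (itc \<omega> m v') \<le> cdist (g u) (g v) + cdist (g v) (g v') + cdist (g v') (itc \<omega> m v')"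
      using cdist_triangle[OF gu gv Fv] cdist_triangle[OF gv gv' Fv] by linarith
    ultimately have "cdist (g u) (itc \<omega> m u') \<le> r" "cdist (g u) (itc \<omega> m v') \<le> r"
      using guv \<open>r > 0\<close> by linarith+
    then show ?thesis by blast
  qed
  then show ?thesis unfolding trap_def using E gu by blast
qed

text \<open>Proximality brings \<open>u\<close> and \<open>v\<close> close together under some \<open>g\<close> in the semigroup, and the walk
  follows \<open>g\<close> with positive probability.\<close>

lemma exists_trap:
  assumes prox: "proximal (gen_semigroup (support \<nu>))" and "r > 0" and u: "u \<in> circle" and v: "v \<in> circle"
  obtains \<eta> m E w where "\<eta> > 0" "trap r \<eta> u v m E w" "measure seq.S E > 0"
proof -
  have r4: "r/4 > 0" using \<open>r > 0\<close> by simp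
  obtain gs where gs: "\<forall>n. gs n \<in> gen_semigroup (support \<nu>)" "(\<lambda>n. cdist (gs n u) (gs n v)) \<longlonglongrightarrow> 0"
    using prox u v unfolding proximal_def by blast
  obtain n0 where "cdist (gs n0 u) (gs n0 v) < r/4"
    using order_tendstoD(2)[OF gs(2) r4] eventually_happens'[OF sequentially_bot] by blast
  then obtain g where g: "g \<in> gen_semigroup (support \<nu>)" and guv: "cdist (g u) (g v) < r/4"
    using gs(1) by blast
  have "walk_approximates g" "uccont g" and g_circle: "g \<in> circle \<rightarrow> circle"
    using walk_approximates_gen_semigroup[OF g] by auto
  obtain \<eta> where "\<eta> > 0" and \<eta>: "\<forall>a\<in>circle. \<forall>b\<in>circle. cdist a b < \<eta> \<longrightarrow> cdist (g a) (g b) < r/4"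
    using \<open>uccont g\<close> r4 unfolding uccont_def by blast
  obtain m E where E: "E \<in> sets seq.S" "depends_on_prefix E m" "emeasure seq.S E > 0"
      "\<forall>\<omega>\<in>E. \<forall>t\<in>circle. cdist (itc \<omega> m t) (g t) < r/4"
    using \<open>walk_approximates g\<close> r4 unfolding walk_approximates_def by blast
  have "trap r \<eta> u v m E (g u)"
    by (rule trap_of_approximation[OF g_circle u v \<open>r > 0\<close> E(1,2) guv \<eta> E(4)])
  moreover have "measure seq.S E > 0" using E(3) seq.P.emeasure_eq_measure by simp
  ultimately show thesis using \<open>\<eta> > 0\<close> that by blast
qed

lemma uniform_trap:
  assumes prox: "proximal (gen_semigroup (support \<nu>))" and "r > 0"
  obtains c where "c > 0"
    "\<And>u v. u \<in> circle \<Longrightarrow> v \<in> circle \<Longrightarrow> \<exists>m E w. trap r c u v m E w \<and> measure seq.S E \<ge> c"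
proof -
  let ?P = "\<lambda>u v \<delta>. \<exists>m E w. trap r \<delta> u v m E w \<and> measure seq.S E \<ge> \<delta>"
  have "\<exists>\<delta>>0. \<forall>u\<in>circle. \<forall>v\<in>circle. ?P u v \<delta>"
  proof (rule circle_pairs_uniform)
    show "?P u v \<delta>'" if "?P u v \<delta>" "0 < \<delta>'" "\<delta>' \<le> \<delta>" for u v \<delta> \<delta>'
      using that unfolding trap_def by (meson order_trans less_le_trans)
    fix u v assume u: "u \<in> circle" and v: "v \<in> circle"
    obtain \<eta> m E w where "\<eta> > 0" "trap r \<eta> u v m E w" "measure seq.S E > 0"
      using exists_trap[OF prox \<open>r > 0\<close> u v] by blast
    define \<delta> where "\<delta> = min (measure seq.S E) (\<eta> / 2)"
    have "?P u' v' \<delta>" if "u' \<in> circle" "v' \<in> circle" "cdist u u' < \<delta>" "cdist v v' < \<delta>" for u' v'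
    proof -
      have "cdist u u' + \<delta> \<le> \<eta>" "cdist v v' + \<delta> \<le> \<eta>"
        using that(3,4) by (auto simp: \<delta>_def)
      then have "trap r \<delta> u' v' m E w"
        by (rule trap_nearby[OF \<open>trap r \<eta> u v m E w\<close> u v that(1,2)])
      moreover have "\<delta> \<le> measure seq.S E" by (simp add: \<delta>_def)
      ultimately show ?thesis by blast
    qed
    then show "\<exists>\<delta>>0. \<forall>u'\<in>circle. \<forall>v'\<in>circle. cdist u u' < \<delta> \<longrightarrow> cdist v v' < \<delta> \<longrightarrow> ?P u' v' \<delta>"
      using \<open>\<eta> > 0\<close> \<open>measure seq.S E > 0\<close> by (intro exI[of _ \<delta>]) (auto simp: \<delta>_def)
  qed
  then show thesis using that by blast
qed

end

section \<open>Repeated trials\<close>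

text \<open>Cover the pairs of points by \<open>N \<times> N\<close> grid cells,
  each with a trap of probability at least \<open>c\<close> that takes at most \<open>stage_len\<close> steps. Stage \<open>k\<close>
  starts at time \<open>k * stage_len\<close>: it looks up the cell of the current images of \<open>x\<close> and \<open>y\<close>, and
  succeeds if the walk from there realises the trap of that cell. All stages before \<open>K\<close> fail with
  probability at most \<open>(1 - c) ^ K\<close>; after the first success both images lie in an \<open>r\<close>-ball, and
  the walk from then on fails to contract that ball with probability less than \<open>\<epsilon>\<close>,
  independently of the past.\<close>

locale repeated_trials = hom_random_walk +
  fixes q x y r c \<epsilon> :: real and N :: nat
    and steps :: "nat \<times> nat \<Rightarrow> nat" and event :: "nat \<times> nat \<Rightarrow> (nat \<Rightarrow> real \<Rightarrow> real) set"
    and centre :: "nat \<times> nat \<Rightarrow> real"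
  assumes x: "x \<in> circle" and y: "y \<in> circle" and xy: "x \<noteq> y" and q: "0 < q" "q < 1"
    and r: "r < 1/2" and N: "N \<ge> 1" "1 / real N \<le> c"
    and trap_cells: "\<And>p. p \<in> {..<N} \<times> {..<N} \<Longrightarrow>
      trap r c (real (fst p) / real N) (real (snd p) / real N) (steps p) (event p) (centre p) \<and>
      measure seq.S (event p) \<ge> c"
    and small_ball: "\<And>w. w \<in> circle \<Longrightarrow> measure seq.S (not_contracting q (ccball w r)) < \<epsilon>"
begin

definition cells :: "(nat \<times> nat) set" where
  "cells = {..<N} \<times> {..<N}"

definition stage_len :: nat where
  "stage_len = 1 + (\<Sum>p\<in>cells. steps p)"

definition cell_at :: "nat \<Rightarrow> (nat \<Rightarrow> real \<Rightarrow> real) \<Rightarrow> nat \<times> nat" where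
  "cell_at k \<omega> = (nat \<lfloor>real N * itc \<omega> (k * stage_len) x\<rfloor>, nat \<lfloor>real N * itc \<omega> (k * stage_len) y\<rfloor>)"

definition hit :: "nat \<Rightarrow> (nat \<Rightarrow> real \<Rightarrow> real) set" where
  "hit k = {\<omega> \<in> space seq.S. shift_seq (k * stage_len) \<omega> \<in> event (cell_at k \<omega>)}"

definition waiting :: "nat \<Rightarrow> (nat \<Rightarrow> real \<Rightarrow> real) set" where
  "waiting k = space seq.S - (\<Union>l<k. hit l)"

definition waiting_in :: "nat \<Rightarrow> nat \<times> nat \<Rightarrow> (nat \<Rightarrow> real \<Rightarrow> real) set" where
  "waiting_in k p = {\<omega> \<in> waiting k. cell_at k \<omega> = p}"

definition first_hit :: "nat \<Rightarrow> nat \<times> nat \<Rightarrow> (nat \<Rightarrow> real \<Rightarrow> real) set" where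
  "first_hit k p = {\<omega> \<in> waiting_in k p. shift_seq (k * stage_len) \<omega> \<in> event p}"

definition bad_after :: "nat \<Rightarrow> nat \<times> nat \<Rightarrow> (nat \<Rightarrow> real \<Rightarrow> real) set" where
  "bad_after k p = {\<omega> \<in> first_hit k p.
     shift_seq (k * stage_len + steps p) \<omega> \<in> not_contracting q (ccball (centre p) r)}"

definition bad_cover :: "nat \<Rightarrow> (nat \<Rightarrow> real \<Rightarrow> real) set" where
  "bad_cover K = waiting K \<union> (\<Union>(k, p)\<in>{..<K} \<times> cells. bad_after k p)"

lemma finite_cells: "finite cells"
  by (simp add: cells_def)

lemma trap_cell:
  assumes "p \<in> cells"
  shows "event p \<in> sets seq.S" "depends_on_prefix (event p) stage_len" "centre p \<in> circle"
    "measure seq.S (event p) \<ge> c"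
    "\<And>u v \<omega>. u \<in> circle \<Longrightarrow> v \<in> circle \<Longrightarrow> cdist (real (fst p) / real N) u < c \<Longrightarrow>
      cdist (real (snd p) / real N) v < c \<Longrightarrow> \<omega> \<in> event p \<Longrightarrow>
      cdist (centre p) (itc \<omega> (steps p) u) \<le> r \<and> cdist (centre p) (itc \<omega> (steps p) v) \<le> r"
proof -
  have trap: "trap r c (real (fst p) / real N) (real (snd p) / real N) (steps p) (event p) (centre p)"
    and "measure seq.S (event p) \<ge> c"
    using trap_cells assms by (simp_all add: cells_def)
  then show "event p \<in> sets seq.S" "centre p \<in> circle" "measure seq.S (event p) \<ge> c"
    by (simp_all add: trap_def)
  have "steps p \<le> stage_len"
    unfolding stage_len_def using member_le_sum[of p cells steps] finite_cells assms by simp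
  moreover have "depends_on_prefix (event p) (steps p)" using trap by (simp add: trap_def)
  ultimately show "depends_on_prefix (event p) stage_len"
    using depends_on_prefix_mono by blast
  fix u v \<omega>
  assume "u \<in> circle" "v \<in> circle" "cdist (real (fst p) / real N) u < c"
    "cdist (real (snd p) / real N) v < c" "\<omega> \<in> event p"
  then show "cdist (centre p) (itc \<omega> (steps p) u) \<le> r \<and> cdist (centre p) (itc \<omega> (steps p) v) \<le> r"
    using trap unfolding trap_def by blast
qed

lemma c_le_1: "c \<le> 1"
proof -
  have "(0, 0) \<in> cells" using N by (simp add: cells_def)
  then show ?thesis using trap_cell(4)[of "(0, 0)"] seq.P.prob_le_1[of "event (0, 0)"] by linarith
qed

lemma cell_at_cong:
  assumes "\<forall>i<k * stage_len. \<omega> i = \<omega>' i"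
  shows "cell_at k \<omega> = cell_at k \<omega>'"
proof -
  have "itc \<omega> (k * stage_len) z = itc \<omega>' (k * stage_len) z" for z using assms by (intro itc_cong) auto
  then show ?thesis unfolding cell_at_def by simp
qed

lemma grid_cell:
  assumes u: "u \<in> circle"
  shows "nat \<lfloor>real N * u\<rfloor> < N" "cdist (real (nat \<lfloor>real N * u\<rfloor>) / real N) u < c"
proof -
  obtain M where NM: "N = Suc M" using N(1) by (cases N) auto
  have g: "real_of_int \<lfloor>real N * u\<rfloor> / real N \<in> circle"
    "cdist u (real_of_int \<lfloor>real N * u\<rfloor> / real N) < 1 / real N"
    unfolding NM by (rule floor_grid_approx[OF u])+
  have "0 \<le> \<lfloor>real N * u\<rfloor>" using u by (simp add: circle_def)
  then have nat_eq: "real (nat \<lfloor>real N * u\<rfloor>) = real_of_int \<lfloor>real N * u\<rfloor>" by simp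
  have "real_of_int \<lfloor>real N * u\<rfloor> < real N" using g(1) NM by (simp add: circle_def divide_less_eq)
  then show "nat \<lfloor>real N * u\<rfloor> < N" using nat_eq by linarith
  show "cdist (real (nat \<lfloor>real N * u\<rfloor>) / real N) u < c"
    using g(2) N(2) by (simp add: nat_eq cdist_commute)
qed

lemma cell_at_in_cells: "\<omega> \<in> space seq.S \<Longrightarrow> cell_at k \<omega> \<in> cells"
  using grid_cell(1) itc_in_circle[of \<omega> x] itc_in_circle[of \<omega> y] x y space_seq
  unfolding cell_at_def cells_def by auto

lemma cell_at_near:
  assumes "\<omega> \<in> space seq.S"
  shows "cdist (real (fst (cell_at k \<omega>)) / real N) (itc \<omega> (k * stage_len) x) < c"
    "cdist (real (snd (cell_at k \<omega>)) / real N) (itc \<omega> (k * stage_len) y) < c"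
  using grid_cell(2) itc_in_circle[of \<omega> x] itc_in_circle[of \<omega> y] x y space_seq assms
  unfolding cell_at_def by auto

lemma sets_cell_at_eq: "{\<omega> \<in> space seq.S. cell_at k \<omega> = p} \<in> sets seq.S"
proof -
  have "(\<lambda>\<omega>. nat \<lfloor>real N * itc \<omega> (k * stage_len) z\<rfloor>) \<in> measurable seq.S (count_space UNIV)"
    if "z \<in> circle" for z
  proof -
    have [measurable]: "(\<lambda>\<omega>. itc \<omega> (k * stage_len) z) \<in> borel_measurable seq.S"
      using measurable_itc[OF that] .
    have "(\<lambda>\<omega>. \<lfloor>real N * itc \<omega> (k * stage_len) z\<rfloor>) \<in> measurable seq.S (count_space UNIV)" by measurable
    then show ?thesis using measurable_compose[of _ _ _ nat "count_space UNIV"] by simp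
  qed
  then have "(\<lambda>\<omega>. nat \<lfloor>real N * itc \<omega> (k * stage_len) x\<rfloor>) -` {fst p} \<inter> space seq.S \<inter>
      ((\<lambda>\<omega>. nat \<lfloor>real N * itc \<omega> (k * stage_len) y\<rfloor>) -` {snd p} \<inter> space seq.S) \<in> sets seq.S"
    using x y by (intro sets.Int measurable_sets) auto
  moreover have "{\<omega> \<in> space seq.S. cell_at k \<omega> = p} =
      (\<lambda>\<omega>. nat \<lfloor>real N * itc \<omega> (k * stage_len) x\<rfloor>) -` {fst p} \<inter> space seq.S \<inter>
      ((\<lambda>\<omega>. nat \<lfloor>real N * itc \<omega> (k * stage_len) y\<rfloor>) -` {snd p} \<inter> space seq.S)"
    by (cases p) (auto simp: cell_at_def)
  ultimately show ?thesis by simp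
qed

lemma sets_hit: "hit k \<in> sets seq.S"
proof -
  have "hit k = (\<Union>p\<in>cells. {\<omega> \<in> {\<omega> \<in> space seq.S. cell_at k \<omega> = p}. shift_seq (k * stage_len) \<omega> \<in> event p})"
    unfolding hit_def using cell_at_in_cells by auto
  also have "\<dots> \<in> sets seq.S"
    using sets_cell_at_eq trap_cell(1) finite_cells by (intro sets.finite_UN sets_shift_seq_vimage) auto
  finally show ?thesis .
qed

lemma sets_waiting: "waiting k \<in> sets seq.S"
  unfolding waiting_def using sets_hit by (intro sets.Diff sets.finite_UN) auto

lemma sets_waiting_in: "waiting_in k p \<in> sets seq.S"
proof -
  have "waiting_in k p = waiting k \<inter> {\<omega> \<in> space seq.S. cell_at k \<omega> = p}"
    unfolding waiting_in_def waiting_def by auto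
  then show ?thesis using sets_waiting sets_cell_at_eq by simp
qed

lemma sets_first_hit:
  assumes "p \<in> cells"
  shows "first_hit k p \<in> sets seq.S"
  unfolding first_hit_def using sets_waiting_in trap_cell(1)[OF assms] by (rule sets_shift_seq_vimage)

lemma sets_bad_after:
  assumes "p \<in> cells"
  shows "bad_after k p \<in> sets seq.S"
  unfolding bad_after_def using sets_first_hit[OF assms] sets_not_contracting by (rule sets_shift_seq_vimage)

lemma sets_bad_cover: "bad_cover K \<in> sets seq.S"
  unfolding bad_cover_def using sets_waiting sets_bad_after finite_cells
  by (intro sets.Un sets.finite_UN) auto

lemma hit_cong:
  assumes \<omega>: "\<omega> \<in> space seq.S" "\<omega>' \<in> space seq.S" and agree: "\<forall>i<k * stage_len + stage_len. \<omega> i = \<omega>' i"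
  shows "\<omega> \<in> hit k \<longleftrightarrow> \<omega>' \<in> hit k"
proof -
  have cell: "cell_at k \<omega> = cell_at k \<omega>'" using agree by (intro cell_at_cong) simp
  have "\<forall>i<stage_len. shift_seq (k * stage_len) \<omega> i = shift_seq (k * stage_len) \<omega>' i"
    using agree by (simp add: shift_seq_def add.commute)
  then have "shift_seq (k * stage_len) \<omega> \<in> event (cell_at k \<omega>) \<longleftrightarrow> shift_seq (k * stage_len) \<omega>' \<in> event (cell_at k \<omega>)"
    using trap_cell(2)[OF cell_at_in_cells[OF \<omega>(1)], unfolded depends_on_prefix_def, rule_format,
        OF shift_seq_in_space[OF \<omega>(1)] shift_seq_in_space[OF \<omega>(2)]] by blast
  then show ?thesis unfolding hit_def using \<omega> cell by simp
qed

lemma depends_on_prefix_waiting: "depends_on_prefix (waiting k) (k * stage_len)"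
  unfolding depends_on_prefix_def
proof (intro ballI impI)
  fix \<omega> \<omega>' assume \<omega>: "\<omega> \<in> space seq.S" "\<omega>' \<in> space seq.S" and agree: "\<forall>i<k * stage_len. \<omega> i = \<omega>' i"
  have "\<omega> \<in> hit l \<longleftrightarrow> \<omega>' \<in> hit l" if "l < k" for l
  proof (rule hit_cong[OF \<omega>])
    have "l * stage_len + stage_len \<le> k * stage_len"
      using that by (metis Suc_leI add.commute mult_Suc mult_le_mono1)
    then show "\<forall>i<l * stage_len + stage_len. \<omega> i = \<omega>' i" using agree by simp
  qed
  then show "\<omega> \<in> waiting k \<longleftrightarrow> \<omega>' \<in> waiting k" unfolding waiting_def using \<omega> by blast
qed

lemma depends_on_prefix_waiting_in: "depends_on_prefix (waiting_in k p) (k * stage_len)"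
  unfolding depends_on_prefix_def
proof (intro ballI impI)
  fix \<omega> \<omega>' assume \<omega>: "\<omega> \<in> space seq.S" "\<omega>' \<in> space seq.S" and agree: "\<forall>i<k * stage_len. \<omega> i = \<omega>' i"
  then have "\<omega> \<in> waiting k \<longleftrightarrow> \<omega>' \<in> waiting k"
    using depends_on_prefix_waiting unfolding depends_on_prefix_def by blast
  then show "\<omega> \<in> waiting_in k p \<longleftrightarrow> \<omega>' \<in> waiting_in k p"
    unfolding waiting_in_def using cell_at_cong[OF agree] by simp
qed

lemma measure_first_hit:
  "p \<in> cells \<Longrightarrow> measure seq.S (first_hit k p) = measure seq.S (waiting_in k p) * measure seq.S (event p)"
  unfolding first_hit_def
  using measure_shift_seq_indep[OF sets_waiting_in depends_on_prefix_waiting_in trap_cell(1)] by simp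

lemma measure_bad_after:
  assumes "p \<in> cells"
  shows "measure seq.S (bad_after k p) =
    measure seq.S (first_hit k p) * measure seq.S (not_contracting q (ccball (centre p) r))"
proof -
  have "depends_on_prefix (event p) (steps p)"
    using trap_cells[of p] assms by (simp add: cells_def trap_def)
  then have "depends_on_prefix (first_hit k p) (k * stage_len + steps p)"
    unfolding first_hit_def by (rule depends_on_prefix_shift_seq[OF depends_on_prefix_waiting_in])
  then show ?thesis unfolding bad_after_def
    using measure_shift_seq_indep[OF sets_first_hit[OF assms] _ sets_not_contracting] by simp
qed

lemma waiting_Suc: "waiting (Suc k) = waiting k - hit k"
  unfolding waiting_def by (auto simp: lessThan_Suc)

lemma waiting_eq_UN_waiting_in: "waiting k = (\<Union>p\<in>cells. waiting_in k p)"
  unfolding waiting_in_def waiting_def using cell_at_in_cells by auto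

lemma waiting_Int_hit_eq_UN_first_hit: "waiting k \<inter> hit k = (\<Union>p\<in>cells. first_hit k p)"
  unfolding first_hit_def waiting_in_def hit_def waiting_def using cell_at_in_cells by auto

lemma disjoint_family_waiting_in: "disjoint_family_on (waiting_in k) cells"
  unfolding disjoint_family_on_def waiting_in_def by auto

lemma disjoint_family_first_hit: "disjoint_family_on (first_hit k) cells"
  unfolding disjoint_family_on_def first_hit_def waiting_in_def by auto

lemma measure_waiting_Int_hit:
  "measure seq.S (waiting k \<inter> hit k) = measure seq.S (waiting k) - measure seq.S (waiting (Suc k))"
proof -
  have "waiting (Suc k) = waiting k - (waiting k \<inter> hit k)" using waiting_Suc by blast
  then show ?thesis using sets_waiting sets_hit by (simp add: seq.P.finite_measure_Diff)
qed

lemma measure_waiting_Int_hit_eq_sum: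
  "measure seq.S (waiting k \<inter> hit k) = (\<Sum>p\<in>cells. measure seq.S (first_hit k p))"
  unfolding waiting_Int_hit_eq_UN_first_hit using sets_first_hit
  by (intro seq.P.finite_measure_finite_Union[OF finite_cells _ disjoint_family_first_hit]) auto

lemma measure_waiting_Suc_le: "measure seq.S (waiting (Suc k)) \<le> (1 - c) * measure seq.S (waiting k)"
proof -
  have "measure seq.S (waiting k) = (\<Sum>p\<in>cells. measure seq.S (waiting_in k p))"
    unfolding waiting_eq_UN_waiting_in using sets_waiting_in
    by (intro seq.P.finite_measure_finite_Union[OF finite_cells _ disjoint_family_waiting_in]) auto
  also have "c * \<dots> \<le> (\<Sum>p\<in>cells. measure seq.S (first_hit k p))"
    unfolding sum_distrib_left
  proof (rule sum_mono)
    fix p assume "p \<in> cells"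
    then show "c * measure seq.S (waiting_in k p) \<le> measure seq.S (first_hit k p)"
      using trap_cell(4) measure_first_hit
      by (simp add: mult.commute mult_right_mono)
  qed
  also have "\<dots> = measure seq.S (waiting k) - measure seq.S (waiting (Suc k))"
    using measure_waiting_Int_hit measure_waiting_Int_hit_eq_sum by simp
  finally show ?thesis by (simp add: algebra_simps)
qed

lemma measure_waiting_le: "measure seq.S (waiting K) \<le> (1 - c) ^ K"
proof (induction K)
  case (Suc K)
  have "measure seq.S (waiting (Suc K)) \<le> (1 - c) * measure seq.S (waiting K)"
    by (rule measure_waiting_Suc_le)
  also have "\<dots> \<le> (1 - c) * (1 - c) ^ K" using Suc c_le_1 by (intro mult_left_mono) auto
  finally show ?case by simp
qed simp

lemma measure_bad_cover_le: "measure seq.S (bad_cover K) \<le> (1 - c) ^ K + \<epsilon>"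
proof -
  let ?U = "\<Union>(k, p)\<in>{..<K} \<times> cells. bad_after k p"
  have fin: "finite ({..<K} \<times> cells)" using finite_cells by simp
  have "measure seq.S ?U \<le> (\<Sum>kp\<in>{..<K} \<times> cells. measure seq.S (case_prod bad_after kp))"
    by (rule seq.P.finite_measure_subadditive_finite[OF fin]) (use sets_bad_after in auto)
  also have "\<dots> = (\<Sum>k<K. \<Sum>p\<in>cells. measure seq.S (bad_after k p))"
    by (simp add: sum.cartesian_product split_beta)
  also have "\<dots> \<le> (\<Sum>k<K. \<Sum>p\<in>cells. \<epsilon> * measure seq.S (first_hit k p))"
  proof (intro sum_mono)
    fix k p assume "p \<in> cells"
    then have "measure seq.S (not_contracting q (ccball (centre p) r)) \<le> \<epsilon>"
      using small_ball trap_cell(3) by fastforce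
    then show "measure seq.S (bad_after k p) \<le> \<epsilon> * measure seq.S (first_hit k p)"
      using measure_bad_after[OF \<open>p \<in> cells\<close>, of k] mult_right_mono[of _ \<epsilon> "measure seq.S (first_hit k p)"]
      by (simp add: mult.commute)
  qed
  also have "\<dots> = \<epsilon> * (\<Sum>k<K. measure seq.S (waiting k) - measure seq.S (waiting (Suc k)))"
  proof -
    have "(\<Sum>p\<in>cells. \<epsilon> * measure seq.S (first_hit k p)) =
        \<epsilon> * (measure seq.S (waiting k) - measure seq.S (waiting (Suc k)))" for k
      using measure_waiting_Int_hit_eq_sum[of k] measure_waiting_Int_hit[of k]
      by (simp add: sum_distrib_left[symmetric])
    then show ?thesis by (simp add: sum_distrib_left)
  qed
  also have "\<dots> \<le> \<epsilon>"
  proof -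
    have "(\<Sum>k<K. measure seq.S (waiting k) - measure seq.S (waiting (Suc k))) \<le> 1"
      using sum_lessThan_telescope'[of "\<lambda>k. measure seq.S (waiting k)" K]
        seq.P.prob_le_1[of "waiting 0"] measure_nonneg[of seq.S "waiting K"] by linarith
    moreover have "0 \<le> \<epsilon>"
      using small_ball[OF x] measure_nonneg[of seq.S "not_contracting q (ccball x r)"] by linarith
    ultimately show ?thesis by (simp add: mult_left_le)
  qed
  finally have "measure seq.S ?U \<le> \<epsilon>" .
  moreover have "measure seq.S (bad_cover K) \<le> measure seq.S (waiting K) + measure seq.S ?U"
    unfolding bad_cover_def using sets_waiting sets_bad_after fin
    by (intro measure_Un_le sets.finite_UN) auto
  ultimately show ?thesis using measure_waiting_le[of K] by linarith
qed

lemma first_hit_traps: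
  assumes "\<omega> \<in> first_hit k p"
  shows "cdist (centre p) (itc \<omega> (k * stage_len + steps p) x) \<le> r"
    "cdist (centre p) (itc \<omega> (k * stage_len + steps p) y) \<le> r"
proof -
  have \<omega>: "\<omega> \<in> space seq.S" and p: "p = cell_at k \<omega>" and "shift_seq (k * stage_len) \<omega> \<in> event p"
    using assms by (auto simp: first_hit_def waiting_in_def waiting_def)
  moreover have "itc \<omega> (k * stage_len) x \<in> circle" "itc \<omega> (k * stage_len) y \<in> circle"
    using itc_in_circle x y \<omega> space_seq by auto
  ultimately show "cdist (centre p) (itc \<omega> (k * stage_len + steps p) x) \<le> r"
    "cdist (centre p) (itc \<omega> (k * stage_len + steps p) y) \<le> r"
    using trap_cell(5)[OF cell_at_in_cells[OF \<omega>]] cell_at_near[OF \<omega>] by (simp_all add: itc_add)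
qed

lemma not_contracting_subset_bad_cover:
  "not_contracting q (carc x y) \<inter> not_contracting q (carc y x) \<subseteq> bad_cover K"
proof
  fix \<omega> assume "\<omega> \<in> not_contracting q (carc x y) \<inter> not_contracting q (carc y x)"
  then have \<omega>: "\<omega> \<in> space seq.S" and not_xy: "\<not> contracting_near_rat q \<omega> (carc x y)"
    and not_yx: "\<not> contracting_near_rat q \<omega> (carc y x)"
    by (auto simp: not_contracting_def)
  show "\<omega> \<in> bad_cover K"
  proof (cases "\<omega> \<in> waiting K")
    case False
    then have "\<exists>l. l < K \<and> \<omega> \<in> hit l" using \<omega> by (auto simp: waiting_def)
    then obtain k where k: "k < K" "\<omega> \<in> hit k" and least: "\<forall>l<k. \<not> (l < K \<and> \<omega> \<in> hit l)"
      using exists_least_iff[of "\<lambda>l. l < K \<and> \<omega> \<in> hit l"] by blast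
    have before: "\<forall>l<k. \<omega> \<notin> hit l" using least k(1) by auto
    define p where "p = cell_at k \<omega>"
    have p: "p \<in> cells" using cell_at_in_cells[OF \<omega>] by (simp add: p_def)
    have hit: "\<omega> \<in> first_hit k p"
      using \<omega> k(2) before by (simp add: first_hit_def waiting_in_def waiting_def hit_def p_def)
    have "\<not> contracting_near_rat q (shift_seq (k * stage_len + steps p) \<omega>) (ccball (centre p) r)"
    proof
      assume "contracting_near_rat q (shift_seq (k * stage_len + steps p) \<omega>) (ccball (centre p) r)"
      moreover have "\<omega> \<in> UNIV \<rightarrow> HomS1" using \<omega> space_seq by simp
      ultimately show False
        using contracting_near_rat_transfer[OF _ q x y xy trap_cell(3)[OF p] r first_hit_traps[OF hit]]
          not_xy not_yx by blast
    qed
    then have "\<omega> \<in> bad_after k p"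
      using hit shift_seq_in_space[OF \<omega>] by (simp add: bad_after_def not_contracting_def)
    then show ?thesis using k(1) p unfolding bad_cover_def by blast
  qed (simp add: bad_cover_def)
qed

end

context hom_random_walk
begin

lemma measure_not_contracting_both_less:
  assumes lc: "local_contraction_rate \<nu> q" and prox: "proximal (gen_semigroup (support \<nu>))"
    and q: "0 < q" "q < 1" and x: "x \<in> circle" and y: "y \<in> circle" and xy: "x \<noteq> y" and "\<epsilon> > 0"
  shows "measure seq.S (not_contracting q (carc x y) \<inter> not_contracting q (carc y x)) < 2 * \<epsilon>"
proof -
  obtain r where r: "r > 0" "r < 1/2"
    and small_ball: "\<And>w. w \<in> circle \<Longrightarrow> measure seq.S (not_contracting q (ccball w r)) < \<epsilon>"
    using uniform_ccball_radius[OF lc \<open>\<epsilon> > 0\<close>] by blast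
  obtain c where "c > 0"
    and traps: "\<And>u v. u \<in> circle \<Longrightarrow> v \<in> circle \<Longrightarrow> \<exists>m E w. trap r c u v m E w \<and> measure seq.S E \<ge> c"
    using uniform_trap[OF prox \<open>r > 0\<close>] by blast
  obtain N0 where "inverse (real (Suc N0)) < c" using reals_Archimedean[OF \<open>c > 0\<close>] by blast
  then have N: "Suc N0 \<ge> 1" "1 / real (Suc N0) \<le> c" by (simp_all add: inverse_eq_divide)
  have "\<forall>p\<in>{..<Suc N0} \<times> {..<Suc N0}. \<exists>m E w.
      trap r c (real (fst p) / real (Suc N0)) (real (snd p) / real (Suc N0)) m E w \<and> measure seq.S E \<ge> c"
    by (intro ballI traps) (auto simp: circle_def)
  then obtain steps where "\<forall>p\<in>{..<Suc N0} \<times> {..<Suc N0}. \<exists>E w.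
      trap r c (real (fst p) / real (Suc N0)) (real (snd p) / real (Suc N0)) (steps p) E w \<and> measure seq.S E \<ge> c"
    by (metis bchoice)
  then obtain event where "\<forall>p\<in>{..<Suc N0} \<times> {..<Suc N0}. \<exists>w.
      trap r c (real (fst p) / real (Suc N0)) (real (snd p) / real (Suc N0)) (steps p) (event p) w \<and>
      measure seq.S (event p) \<ge> c"
    by (metis bchoice)
  then obtain centre where cells: "\<forall>p\<in>{..<Suc N0} \<times> {..<Suc N0}.
      trap r c (real (fst p) / real (Suc N0)) (real (snd p) / real (Suc N0)) (steps p) (event p) (centre p) \<and>
      measure seq.S (event p) \<ge> c"
    by (metis bchoice)
  interpret repeated_trials \<nu> q x y r c \<epsilon> "Suc N0" steps event centre
    using x y xy q r N cells small_ball by unfold_locales auto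
  have "(\<lambda>n. (1 - c) ^ n) \<longlonglongrightarrow> 0" using \<open>c > 0\<close> c_le_1 by (intro LIMSEQ_power_zero) auto
  from order_tendstoD(2)[OF this \<open>\<epsilon> > 0\<close>] obtain K where K: "(1 - c) ^ K < \<epsilon>"
    unfolding eventually_sequentially by blast
  have "measure seq.S (not_contracting q (carc x y) \<inter> not_contracting q (carc y x)) \<le>
      measure seq.S (bad_cover K)"
    using not_contracting_subset_bad_cover sets_bad_cover by (rule seq.P.finite_measure_mono)
  also have "\<dots> \<le> (1 - c) ^ K + \<epsilon>" by (rule measure_bad_cover_le)
  finally show ?thesis using K by linarith
qed

lemma AE_contracting_near_rat_carc:
  assumes lc: "local_contraction_rate \<nu> q" and prox: "proximal (gen_semigroup (support \<nu>))"
    and "x \<in> circle" "y \<in> circle" "x \<noteq> y"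
  shows "AE \<omega> in seq.S. contracting_near_rat q \<omega> (carc x y) \<or> contracting_near_rat q \<omega> (carc y x)"
proof -
  let ?B = "not_contracting q (carc x y) \<inter> not_contracting q (carc y x)"
  have q: "0 < q" "q < 1" using lc by (simp_all add: local_contraction_rate_def)
  have "measure seq.S ?B \<le> 0"
  proof (rule field_le_epsilon)
    fix e :: real assume "e > 0"
    then show "measure seq.S ?B \<le> 0 + e"
      using measure_not_contracting_both_less[OF lc prox q assms(3-5), of "e/2"] by simp
  qed
  then have "measure seq.S ?B = 0" using measure_nonneg[of seq.S ?B] by linarith
  then have "emeasure seq.S ?B = 0" by (simp add: seq.P.emeasure_eq_measure)
  moreover have "{\<omega> \<in> space seq.S. \<not> (contracting_near_rat q \<omega> (carc x y) \<or> contracting_near_rat q \<omega> (carc y x))}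
      = ?B"
    unfolding not_contracting_def by blast
  then have "(AE \<omega> in seq.S. contracting_near_rat q \<omega> (carc x y) \<or> contracting_near_rat q \<omega> (carc y x))
      \<longleftrightarrow> emeasure seq.S ?B = 0"
    by (rule AE_iff_measurable[OF sets.Int[OF sets_not_contracting sets_not_contracting]])
  ultimately show ?thesis by blast
qed

end

theorem proposition2p5:
  fixes \<nu> :: "(real \<Rightarrow> real) measure" and q :: real
  assumes "prob_space \<nu>"
    and "space \<nu> = HomS1"
    and "sets \<nu> = borel_HomS1"
    and "proximal (gen_semigroup (support \<nu>))"
    and "\<not> fixes_point (gen_semigroup (support \<nu>))"
    and "local_contraction_rate \<nu> q"
  shows "\<forall>x\<in>circle. \<forall>y\<in>circle. x \<noteq> y \<longrightarrow>
    (AE \<omega> in prod_measure \<nu>.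
       limsup (\<lambda>n. ereal (ln (cdiam (itc \<omega> n ` carc x y)) / real n)) \<le> ereal (ln q)
     \<or> limsup (\<lambda>n. ereal (ln (cdiam (itc \<omega> n ` carc y x)) / real n)) \<le> ereal (ln q))"
proof (intro ballI impI)
  interpret hom_random_walk \<nu> using assms(1-3) by (simp add: hom_random_walk_def)
  fix x y assume xy: "x \<in> circle" "y \<in> circle" "x \<noteq> y"
  have "q > 0" using assms(6) by (simp add: local_contraction_rate_def)
  show "AE \<omega> in prod_measure \<nu>.
       limsup (\<lambda>n. ereal (ln (cdiam (itc \<omega> n ` carc x y)) / real n)) \<le> ereal (ln q)
     \<or> limsup (\<lambda>n. ereal (ln (cdiam (itc \<omega> n ` carc y x)) / real n)) \<le> ereal (ln q)"
    unfolding prod_measure_eq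
    using AE_contracting_near_rat_carc[OF assms(6,4) xy]
  proof (rule AE_mp[OF _ AE_I2], intro impI)
    fix \<omega> assume "\<omega> \<in> space seq.S"
      and "contracting_near_rat q \<omega> (carc x y) \<or> contracting_near_rat q \<omega> (carc y x)"
    moreover have "\<omega> \<in> UNIV \<rightarrow> HomS1" using \<open>\<omega> \<in> space seq.S\<close> space_seq by simp
    ultimately show "limsup (\<lambda>n. ereal (ln (cdiam (itc \<omega> n ` carc x y)) / real n)) \<le> ereal (ln q)
      \<or> limsup (\<lambda>n. ereal (ln (cdiam (itc \<omega> n ` carc y x)) / real n)) \<le> ereal (ln q)"
      using contracting_near_rat_carc_limsup[OF _ \<open>q > 0\<close> xy]
        contracting_near_rat_carc_limsup[OF _ \<open>q > 0\<close> xy(2,1) xy(3)[symmetric]] by blast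
  qed
qed

end
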